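(* Consider the BSSC$(\alpha,\beta)$ with $\alpha+\beta\ne1$, used with feedback, with the transmission cost $\gamma(a_i,b_{i-1})=1$ if $a_i=b_{i-1}$ and $0$ otherwise, and average cost constraint $\frac1{n+1}\mathbf E[\sum_{i=0}^n\gamma(A_i,B_{i-1})]\le\kappa$. Let $\nu,\lambda$ be as defined below and $\kappa_{max}=\nu$. (a) For $\kappa\in[0,\kappa_{max}]$, every $n$ and every initial state $b_{-1}$, the constrained finite-time feedback capacity $C^{FB,BSSC}_{A^n\to B^n}(\kappa)$ is attained by the time-invariant input $\pi_i(a_i|a^{i-1},b^{i-1})=\pi^{TI}(a_i|b_{i-1})$, $i=0,\dots,n$, where $\pi^{TI}(a|b)=\kappa$ if $a=b$ and $1-\kappa$ if $a\ne b$; the corresponding output transition is time-invariant with $\mathbf P^{TI}(b'|b)=\bar\lambda$ if $b'=b$ and $1-\bar\lambda$ otherwise, where $\bar\lambda=\alpha\kappa+(1-\kappa)(1-\beta)$; and $$C^{FB,BSSC}_{A^n\to B^n}(\kappa)=(n+1)\max_{\pi(\cdot|b_{-1}):\ \mathbf E[\gamma(A_0,b_{-1})]\le\kappa}I(A_0;B_0|B_{-1}=b_{-1})\quad\forall b_{-1}\in\{0,1\}.$$ (b) The per unit time feedback capacity with cost is $$C^{FB,BSSC}_{A^\infty\to B^\infty}(\kappa)=\begin{cases}H(\bar\lambda)-\kappa H(\alpha)-(1-\kappa)H(\beta),&\kappa\le\kappa_{max},\\ H(\lambda)-\kappa_{max}H(\alpha)-(1-\kappa_{max})H(\beta),&\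kappa>\kappa_{max}.\end{cases}$$
   Context: BSSC$(\alpha,\beta)$: $\mathbb A=\mathbb B=\{0,1\}$, $\mathbf P(b_i=a_i|a_i,b_{i-1})=\alpha$ if $a_i=b_{i-1}$ and $=\beta$ if $a_i\ne b_{i-1}$, time-invariant. $H$ is the binary entropy (base 2). $\mu=\frac{H(\beta)-H(\alpha)}{1-\alpha-\beta}$, $\lambda=\frac1{1+2^\mu}$, $\nu=\frac{1-(1-\beta)(1+2^\mu)}{(\alpha+\beta-1)(1+2^\mu)}$. With fixed initial state $b_{-1}$ known to encoder and decoder, $C^{FB,BSSC}_{A^n\to B^n}(\kappa)=\sup\sum_{i=0}^nI(A^i;B_i|B^{i-1})$ over feedback input distributions $\{\mathbf P(a_i|a^{i-1},b^{i-1})\}_{i=0}^n$ satisfying the average cost constraint, and $C^{FB,BSSC}_{A^\infty\to B^\infty}(\kappa)=\lim_{n\to\infty}\frac1{n+1}C^{FB,BSSC}_{A^n\to B^n}(\kappa)$. *)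

theory Defs
  imports "HOL-Analysis.Analysis"
begin

definition binH :: "real \<Rightarrow> real" where
  "binH p = (if p = 0 \<or> p = 1 then 0 else - p * log 2 p - (1 - p) * log 2 (1 - p))"

definition prob :: "('s \<Rightarrow> real) \<Rightarrow> 's set \<Rightarrow> ('s \<Rightarrow> bool) \<Rightarrow> real" where
  "prob p S E = (\<Sum>s\<in>{s\<in>S. E s}. p s)"

definition cmi :: "('s \<Rightarrow> real) \<Rightarrow> 's set \<Rightarrow> ('s \<Rightarrow> 'x) \<Rightarrow> ('s \<Rightarrow> 'y) \<Rightarrow> ('s \<Rightarrow> 'z) \<Rightarrow> real" where
  "cmi p S X Y Z =
     (\<Sum>x\<in>X ` S. \<Sum>y\<in>Y ` S. \<Sum>z\<in>Z ` S.
        let pxyz = prob p S (\<lambda>s. X s = x \<and> Y s = y \<and> Z s = z);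
            pz = prob p S (\<lambda>s. Z s = z);
            pxz = prob p S (\<lambda>s. X s = x \<and> Z s = z);
            pyz = prob p S (\<lambda>s. Y s = y \<and> Z s = z)
        in if pxyz = 0 then 0 else pxyz * log 2 (pxyz * pz / (pxz * pyz)))"

text \<open>Q a bprev b = P(b_i = b | a_i = a, b_{i-1} = bprev).\<close>
definition Qch :: "real \<Rightarrow> real \<Rightarrow> bool \<Rightarrow> bool \<Rightarrow> bool \<Rightarrow> real" where
  "Qch \<alpha> \<beta> a bprev b =
     (if a = bprev then (if b = a then \<alpha> else 1 - \<alpha>)
      else (if b = a then \<beta> else 1 - \<beta>))"

definition gamma :: "bool \<Rightarrow> bool \<Rightarrow> real" where
  "gamma a bprev = (if a = bprev then 1 else 0)"

definition mu :: "real \<Rightarrow> real \<Rightarrow> real" where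
  "mu \<alpha> \<beta> = (binH \<beta> - binH \<alpha>) / (1 - \<alpha> - \<beta>)"

definition lam :: "real \<Rightarrow> real \<Rightarrow> real" where
  "lam \<alpha> \<beta> = 1 / (1 + 2 powr mu \<alpha> \<beta>)"

definition nu :: "real \<Rightarrow> real \<Rightarrow> real" where
  "nu \<alpha> \<beta> = (1 - (1 - \<beta>) * (1 + 2 powr mu \<alpha> \<beta>)) / ((\<alpha> + \<beta> - 1) * (1 + 2 powr mu \<alpha> \<beta>))"

definition lambar :: "real \<Rightarrow> real \<Rightarrow> real \<Rightarrow> real" where
  "lambar \<alpha> \<beta> \<kappa> = \<alpha> * \<kappa> + (1 - \<kappa>) * (1 - \<beta>)"

text \<open>Sample space: input and output sequences a^n, b^n as lists of length n+1
  (list index i = time i). The initial state b_{-1} is a fixed parameter b0.\<close>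
definition seqs :: "nat \<Rightarrow> (bool list \<times> bool list) set" where
  "seqs n = {(as, bs). length as = Suc n \<and> length bs = Suc n}"

definition prevb :: "bool \<Rightarrow> bool list \<Rightarrow> nat \<Rightarrow> bool" where
  "prevb b0 bs i = (if i = 0 then b0 else bs ! (i - 1))"

text \<open>A feedback input distribution: pi i a^{i-1} b^{i-1} a = P(a_i = a | a^{i-1}, b^{i-1}).\<close>
type_synonym policy = "nat \<Rightarrow> bool list \<Rightarrow> bool list \<Rightarrow> bool \<Rightarrow> real"

definition valid_policy :: "policy \<Rightarrow> bool" where
  "valid_policy \<pi> \<longleftrightarrow>
     (\<forall>i as bs a. 0 \<le> \<pi> i as bs a) \<and> (\<forall>i as bs. \<pi> i as bs True + \<pi> i as bs False = 1)"

definition joint :: "real \<Rightarrow> real \<Rightarrow> bool \<Rightarrow> policy \<Rightarrow> nat \<Rightarrow> bool list \<times> bool list \<Rightarrow> real" where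
  "joint \<alpha> \<beta> b0 \<pi> n s =
     (\<Prod>i\<le>n. \<pi> i (take i (fst s)) (take i (snd s)) (fst s ! i)
              * Qch \<alpha> \<beta> (fst s ! i) (prevb b0 (snd s) i) (snd s ! i))"

text \<open>Directed information sum_{i=0}^n I(A^i; B_i | B^{i-1}) (with B_{-1} = b0 fixed).\<close>
definition DI :: "real \<Rightarrow> real \<Rightarrow> bool \<Rightarrow> policy \<Rightarrow> nat \<Rightarrow> real" where
  "DI \<alpha> \<beta> b0 \<pi> n =
     (\<Sum>i\<le>n. cmi (joint \<alpha> \<beta> b0 \<pi> n) (seqs n)
                 (\<lambda>s. take (Suc i) (fst s)) (\<lambda>s. snd s ! i) (\<lambda>s. take i (snd s)))"

definition avg_cost :: "real \<Rightarrow> real \<Rightarrow> bool \<Rightarrow> policy \<Rightarrow> nat \<Rightarrow> real" where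
  "avg_cost \<alpha> \<beta> b0 \<pi> n =
     (1 / real (Suc n)) *
       (\<Sum>i\<le>n. \<Sum>s\<in>seqs n. joint \<alpha> \<beta> b0 \<pi> n s * gamma (fst s ! i) (prevb b0 (snd s) i))"

definition Cfb :: "real \<Rightarrow> real \<Rightarrow> nat \<Rightarrow> real \<Rightarrow> bool \<Rightarrow> real" where
  "Cfb \<alpha> \<beta> n \<kappa> b0 =
     Sup {DI \<alpha> \<beta> b0 \<pi> n | \<pi>. valid_policy \<pi> \<and> avg_cost \<alpha> \<beta> b0 \<pi> n \<le> \<kappa>}"

definition piTI :: "real \<Rightarrow> bool \<Rightarrow> policy" where
  "piTI \<kappa> b0 i as bs a = (if a = prevb b0 bs i then \<kappa> else 1 - \<kappa>)"

definition PTI :: "real \<Rightarrow> real \<Rightarrow> real \<Rightarrow> bool \<Rightarrow> bool \<Rightarrow> real" where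
  "PTI \<alpha> \<beta> \<kappa> b b' = (if b' = b then lambar \<alpha> \<beta> \<kappa> else 1 - lambar \<alpha> \<beta> \<kappa>)"

text \<open>A distribution p(a) = pi(a | b_{-1}) on A_0.\<close>
definition valid_dist :: "(bool \<Rightarrow> real) \<Rightarrow> bool" where
  "valid_dist p \<longleftrightarrow> (\<forall>a. 0 \<le> p a) \<and> p True + p False = 1"

definition mi1 :: "real \<Rightarrow> real \<Rightarrow> bool \<Rightarrow> (bool \<Rightarrow> real) \<Rightarrow> real" where
  "mi1 \<alpha> \<beta> b0 p = cmi (\<lambda>s. p (fst s) * Qch \<alpha> \<beta> (fst s) b0 (snd s)) UNIV fst snd (\<lambda>_. ())"

definition cost1 :: "bool \<Rightarrow> (bool \<Rightarrow> real) \<Rightarrow> real" where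
  "cost1 b0 p = (\<Sum>a\<in>UNIV. p a * gamma a b0)"

end

theory Submission
  imports Defs
begin

text \<open>For any Markov output kernel r, each term I(A^i; B_i | B^{i-1}) of the directed information
  is at most the expected log ratio of the channel Q(B_i | A_i, B_{i-1}) to r(B_i | B_{i-1}), with
  equality when r is the true conditional law of the output. Taking for r the time-invariant
  output kernel PTI of cost k, this expectation is the affine function
  (1 - x) D(1 - \<beta> \<parallel> q) + x D(\<alpha> \<parallel> q) of x = P(A_i = B_{i-1}), where q = lambar k.
  Averaging over time, the directed information of any policy is at most n + 1 times this line
  evaluated at the average cost. The line is tangent at k to the rate
  H(lambar k) - k H(\<alpha>) - (1 - k) H(\<beta>), with nonnegative slope for k \<le> \<nu> and zero slope at
  k = \<nu>, so with k = min \<kappa> \<nu> it stays below the rate at k for all costs up to \<kappa>.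
  The time-invariant input of cost k turns the outputs into exactly the Markov chain PTI and
  attains the bound; the same argument for a single channel use solves the single-letter problem.\<close>

section \<open>Binary entropy and the rate of the time-invariant input\<close>

lemma binH_eq: "binH p = - p * log 2 p - (1 - p) * log 2 (1 - p)"
  by (auto simp: binH_def)

lemma binH_one_minus: "binH (1 - p) = binH p"
  by (auto simp: binH_def algebra_simps)

lemma binH_le_cross_entropy:
  fixes p q :: real
  assumes "0 \<le> p" "p \<le> 1" "0 < q" "q < 1"
  shows "binH p \<le> - p * log 2 q - (1 - p) * log 2 (1 - q)"
proof -
  consider "p = 0" | "p = 1" | "0 < p \<and> p < 1" using assms by linarith
  then show ?thesis
  proof cases
    case 1
    have "log 2 (1 - q) \<le> 0" using assms by simp
    then show ?thesis using 1 by (simp add: binH_def)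
  next
    case 2
    have "log 2 q \<le> 0" using assms by simp
    then show ?thesis using 2 by (simp add: binH_def)
  next
    case 3
    have "ln (q / p) \<le> q / p - 1" "ln ((1 - q) / (1 - p)) \<le> (1 - q) / (1 - p) - 1"
      using 3 assms by (intro ln_le_minus_one; simp)+
    then have "p * ln (q / p) + (1 - p) * ln ((1 - q) / (1 - p))
        \<le> p * (q / p - 1) + (1 - p) * ((1 - q) / (1 - p) - 1)"
      using 3 by (intro add_mono mult_left_mono) auto
    also have "\<dots> = 0" using 3 by (simp add: field_simps)
    finally have "- p * ln p - (1 - p) * ln (1 - p) \<le> - p * ln q - (1 - p) * ln (1 - q)"
      using 3 assms by (simp add: ln_div algebra_simps)
    then have "(- p * ln p - (1 - p) * ln (1 - p)) / ln 2 \<le> (- p * ln q - (1 - p) * ln (1 - q)) / ln 2"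
      by (intro divide_right_mono) auto
    then show ?thesis by (simp add: binH_eq log_def diff_divide_distrib)
  qed
qed

lemma binH_le_tangent:
  fixes p q :: real
  assumes "0 \<le> p" "p \<le> 1" "0 < q" "q < 1"
  shows "binH p - binH q \<le> (p - q) * log 2 ((1 - q) / q)"
  using binH_le_cross_entropy[OF assms] assms
  by (simp add: binH_eq[of q] log_divide algebra_simps)

definition binD :: "real \<Rightarrow> real \<Rightarrow> real" where
  "binD p q = p * log 2 (p / q) + (1 - p) * log 2 ((1 - p) / (1 - q))"

lemma binD_eq:
  fixes p q :: real
  assumes "0 \<le> p" "p \<le> 1" "0 < q" "q < 1"
  shows "binD p q = - binH p - p * log 2 q - (1 - p) * log 2 (1 - q)"
proof -
  have "x * log 2 (x / r) = x * log 2 x - x * log 2 r" if "0 \<le> x" "0 < r" for x r :: real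
    using that by (cases "x = 0") (auto simp: log_divide right_diff_distrib)
  then show ?thesis using assms unfolding binD_def binH_eq by simp
qed

lemma binD_self: "binD p p = 0"
proof -
  have "x * log 2 (x / x) = 0" for x :: real by (cases "x = 0") auto
  then show ?thesis unfolding binD_def by simp
qed

lemma log_odds_le_iff:
  fixes p q :: real
  assumes "0 < p" "p < 1" "0 < q" "q < 1"
  shows "log 2 ((1 - p) / p) \<le> log 2 ((1 - q) / q) \<longleftrightarrow> q \<le> p"
proof -
  have "(1 - p) / p \<le> (1 - q) / q \<longleftrightarrow> q \<le> p"
    using assms by (simp add: field_simps)
  then show ?thesis using assms by simp
qed

lemma one_plus_two_powr_pos: "0 < 1 + 2 powr (x :: real)"
  using powr_gt_zero[of 2 x] by linarith

lemma lam_gt_0: "0 < lam a b" and lam_lt_1: "lam a b < 1"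
  unfolding lam_def using one_plus_two_powr_pos[of "mu a b"] powr_gt_zero[of 2 "mu a b"]
  by (simp_all add: divide_simps)

lemma log_odds_lam: "log 2 ((1 - lam a b) / lam a b) = mu a b"
proof -
  have "(1 - lam a b) / lam a b = 2 powr mu a b"
    unfolding lam_def using one_plus_two_powr_pos[of "mu a b"] by (simp add: field_simps)
  then show ?thesis by simp
qed

lemma le_lam_iff: "0 < q \<Longrightarrow> q < 1 \<Longrightarrow> q \<le> lam a b \<longleftrightarrow> mu a b \<le> log 2 ((1 - q) / q)"
  using log_odds_le_iff[OF lam_gt_0 lam_lt_1] log_odds_lam by metis

lemma lam_le_iff: "0 < q \<Longrightarrow> q < 1 \<Longrightarrow> lam a b \<le> q \<longleftrightarrow> log 2 ((1 - q) / q) \<le> mu a b"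
  using log_odds_le_iff[OF _ _ lam_gt_0 lam_lt_1] log_odds_lam by metis

lemma lambar_eq: "lambar a b k = (1 - b) + (a + b - 1) * k"
  unfolding lambar_def by (simp add: algebra_simps)

text \<open>ti_rate k is the rate of the time-invariant input of cost k; tangent_rate k x is the
  line tangent to it at k, as a function of the cost x.\<close>

definition ti_rate :: "real \<Rightarrow> real \<Rightarrow> real \<Rightarrow> real" where
  "ti_rate a b k = binH (lambar a b k) - k * binH a - (1 - k) * binH b"

definition tangent_rate :: "real \<Rightarrow> real \<Rightarrow> real \<Rightarrow> real \<Rightarrow> real" where
  "tangent_rate a b k x = (1 - x) * binD (1 - b) (lambar a b k) + x * binD a (lambar a b k)"

lemma tangent_rate_eq:
  "tangent_rate a b k x = binD (1 - b) (lambar a b k)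
     + x * (binD a (lambar a b k) - binD (1 - b) (lambar a b k))"
  unfolding tangent_rate_def by (simp add: algebra_simps)

lemma tangent_rate_affine:
  assumes "sum w S = 1"
  shows "(\<Sum>s\<in>S. w s * tangent_rate a b k (f s)) = tangent_rate a b k (\<Sum>s\<in>S. w s * f s)"
proof -
  have "(\<Sum>s\<in>S. w s * tangent_rate a b k (f s))
      = (\<Sum>s\<in>S. w s) * binD (1 - b) (lambar a b k)
        + (\<Sum>s\<in>S. w s * f s) * (binD a (lambar a b k) - binD (1 - b) (lambar a b k))"
    unfolding tangent_rate_eq by (simp add: sum.distrib sum_distrib_right distrib_left mult.assoc)
  then show ?thesis using assms by (simp add: tangent_rate_eq mult.commute)
qed

locale bssc =
  fixes \<alpha> \<beta> :: real
  assumes \<alpha>_nonneg: "0 \<le> \<alpha>" and \<alpha>_le_1: "\<alpha> \<le> 1" and \<beta>_nonneg: "0 \<le> \<beta>" and \<beta>_le_1: "\<beta> \<le> 1"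
begin

lemma Qch_nonneg: "0 \<le> Qch \<alpha> \<beta> x p y"
  unfolding Qch_def using \<alpha>_nonneg \<alpha>_le_1 \<beta>_nonneg \<beta>_le_1 by auto

lemma lambar_range:
  assumes "0 \<le> k" "k \<le> 1"
  shows "0 \<le> lambar \<alpha> \<beta> k \<and> lambar \<alpha> \<beta> k \<le> 1"
proof -
  have "\<alpha> * k \<le> k" "(1 - k) * (1 - \<beta>) \<le> 1 - k"
    using assms \<alpha>_nonneg \<alpha>_le_1 \<beta>_nonneg \<beta>_le_1 by (auto intro: mult_left_le_one_le mult_left_le)
  moreover have "0 \<le> \<alpha> * k" "0 \<le> (1 - k) * (1 - \<beta>)"
    using assms \<alpha>_nonneg \<beta>_le_1 by auto
  ultimately show ?thesis unfolding lambar_def by linarith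
qed

end

locale bssc_nondeg = bssc +
  assumes \<alpha>_plus_\<beta>: "\<alpha> + \<beta> \<noteq> 1"
begin

lemma mu_eq: "mu \<alpha> \<beta> = (binH \<alpha> - binH (1 - \<beta>)) / (\<alpha> + \<beta> - 1)"
proof -
  have "1 - \<alpha> - \<beta> = - (\<alpha> + \<beta> - 1)" by simp
  then show ?thesis unfolding mu_def binH_one_minus by (simp add: divide_simps) (auto simp: algebra_simps)
qed

lemma nu_eq: "nu \<alpha> \<beta> = (lam \<alpha> \<beta> - (1 - \<beta>)) / (\<alpha> + \<beta> - 1)"
proof -
  have "1 + 2 powr mu \<alpha> \<beta> \<noteq> 0" using one_plus_two_powr_pos by (metis less_irrefl)
  then show ?thesis unfolding nu_def lam_def using \<alpha>_plus_\<beta> by (simp add: field_simps)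
qed

lemma lambar_nu: "lambar \<alpha> \<beta> (nu \<alpha> \<beta>) = lam \<alpha> \<beta>"
  using \<alpha>_plus_\<beta> by (simp add: lambar_eq nu_eq)

text \<open>Concavity of binH places lam between the crossover probabilities 1 - \<beta> and \<alpha>.\<close>

lemma lam_between: "min \<alpha> (1 - \<beta>) \<le> lam \<alpha> \<beta> \<and> lam \<alpha> \<beta> \<le> max \<alpha> (1 - \<beta>)"
proof -
  define c where "c = \<alpha> + \<beta> - 1"
  have mu: "c * mu \<alpha> \<beta> = binH \<alpha> - binH (1 - \<beta>)"
    using mu_eq \<alpha>_plus_\<beta> by (simp add: c_def)
  have upper: "c * mu \<alpha> \<beta> \<le> c * log 2 (\<beta> / (1 - \<beta>))" if "0 < \<beta>" "\<beta> < 1"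
  proof -
    have "binH \<alpha> - binH (1 - \<beta>) \<le> (\<alpha> - (1 - \<beta>)) * log 2 ((1 - (1 - \<beta>)) / (1 - \<beta>))"
      using that \<alpha>_nonneg \<alpha>_le_1 by (intro binH_le_tangent) auto
    then show ?thesis unfolding mu by (simp add: c_def algebra_simps)
  qed
  have lower: "c * log 2 ((1 - \<alpha>) / \<alpha>) \<le> c * mu \<alpha> \<beta>" if "0 < \<alpha>" "\<alpha> < 1"
  proof -
    have "binH (1 - \<beta>) - binH \<alpha> \<le> ((1 - \<beta>) - \<alpha>) * log 2 ((1 - \<alpha>) / \<alpha>)"
      using that \<beta>_nonneg \<beta>_le_1 by (intro binH_le_tangent) auto
    then show ?thesis unfolding mu by (simp add: c_def algebra_simps)
  qed
  have l: "0 < lam \<alpha> \<beta>" "lam \<alpha> \<beta> < 1" by (rule lam_gt_0, rule lam_lt_1)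
  consider "0 < c" | "c < 0" using \<alpha>_plus_\<beta> c_def by linarith
  then show ?thesis
  proof cases
    case 1
    have "1 - \<beta> \<le> lam \<alpha> \<beta>"
      using upper le_lam_iff[of "1 - \<beta>" \<alpha> \<beta>] l 1 \<alpha>_le_1 \<beta>_nonneg \<beta>_le_1
      by (cases "\<beta> = 1") (auto simp: c_def)
    moreover have "lam \<alpha> \<beta> \<le> \<alpha>"
      using lower lam_le_iff[of \<alpha> \<alpha> \<beta>] l 1 \<alpha>_nonneg \<alpha>_le_1 \<beta>_le_1
      by (cases "\<alpha> = 1") (auto simp: c_def)
    ultimately show ?thesis by simp
  next
    case 2
    have "\<alpha> \<le> lam \<alpha> \<beta>"
      using lower le_lam_iff[of \<alpha> \<alpha> \<beta>] l 2 \<alpha>_nonneg \<alpha>_le_1 \<beta>_nonneg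
      by (cases "\<alpha> = 0") (auto simp: c_def mult_le_cancel_left)
    moreover have "lam \<alpha> \<beta> \<le> 1 - \<beta>"
      using upper lam_le_iff[of "1 - \<beta>" \<alpha> \<beta>] l 2 \<beta>_nonneg \<beta>_le_1 \<alpha>_nonneg
      by (cases "\<beta> = 0") (auto simp: c_def mult_le_cancel_left)
    ultimately show ?thesis by simp
  qed
qed

lemma nu_range: "0 \<le> nu \<alpha> \<beta> \<and> nu \<alpha> \<beta> \<le> 1"
  using lam_between \<alpha>_plus_\<beta> unfolding nu_eq
  by (cases "\<alpha> + \<beta> - 1 > 0") (auto simp: divide_simps)

lemma lambar_strict_range:
  assumes "0 < k" "k \<le> nu \<alpha> \<beta>"
  shows "0 < lambar \<alpha> \<beta> k \<and> lambar \<alpha> \<beta> k < 1"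
proof -
  define c where "c = \<alpha> + \<beta> - 1"
  have start: "lambar \<alpha> \<beta> k - (1 - \<beta>) = c * k" unfolding lambar_eq c_def by simp
  have stop: "lam \<alpha> \<beta> - lambar \<alpha> \<beta> k = c * (nu \<alpha> \<beta> - k)"
    unfolding lambar_nu[symmetric] lambar_eq c_def by (simp add: algebra_simps)
  have l: "0 < lam \<alpha> \<beta>" "lam \<alpha> \<beta> < 1" by (rule lam_gt_0, rule lam_lt_1)
  consider "0 < c" | "c < 0" using \<alpha>_plus_\<beta> c_def by linarith
  then show ?thesis
  proof cases
    case 1
    then have "0 < c * k" "0 \<le> c * (nu \<alpha> \<beta> - k)" using assms by auto
    then show ?thesis using start stop l \<beta>_le_1 by linarith
  next
    case 2
    then have "c * k < 0" "c * (nu \<alpha> \<beta> - k) \<le> 0"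
      using assms by (auto simp: mult_neg_pos mult_nonpos_nonneg)
    then show ?thesis using start stop l \<beta>_nonneg by linarith
  qed
qed

lemma binD_slope:
  assumes "0 < q" "q < 1"
  shows "binD \<alpha> q - binD (1 - \<beta>) q = (\<alpha> + \<beta> - 1) * (log 2 ((1 - q) / q) - mu \<alpha> \<beta>)"
proof -
  have "binH \<beta> - binH \<alpha> = - (\<alpha> + \<beta> - 1) * mu \<alpha> \<beta>"
    using \<alpha>_plus_\<beta> unfolding mu_def by (simp add: divide_simps)
  then show ?thesis using assms \<alpha>_nonneg \<alpha>_le_1 \<beta>_nonneg \<beta>_le_1
    by (simp add: binD_eq binH_one_minus log_divide algebra_simps)
qed

lemma tangent_slope_nonneg:
  assumes "0 < k" "k \<le> nu \<alpha> \<beta>"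
  shows "0 \<le> binD \<alpha> (lambar \<alpha> \<beta> k) - binD (1 - \<beta>) (lambar \<alpha> \<beta> k)"
proof -
  define q where "q = lambar \<alpha> \<beta> k"
  have q: "0 < q" "q < 1" using lambar_strict_range[OF assms] q_def by auto
  have d: "lam \<alpha> \<beta> - q = (\<alpha> + \<beta> - 1) * (nu \<alpha> \<beta> - k)"
    unfolding q_def lambar_nu[symmetric] lambar_eq by (simp add: algebra_simps)
  consider "0 < \<alpha> + \<beta> - 1" | "\<alpha> + \<beta> - 1 < 0" using \<alpha>_plus_\<beta> by linarith
  then show ?thesis
  proof cases
    case 1
    then have "0 \<le> (\<alpha> + \<beta> - 1) * (nu \<alpha> \<beta> - k)" using assms by simp
    then have "q \<le> lam \<alpha> \<beta>" using d by linarith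
    then show ?thesis using 1 q le_lam_iff binD_slope by (simp add: q_def[symmetric])
  next
    case 2
    then have "(\<alpha> + \<beta> - 1) * (nu \<alpha> \<beta> - k) \<le> 0" using assms by (simp add: mult_nonpos_nonneg)
    then have "lam \<alpha> \<beta> \<le> q" using d by linarith
    then show ?thesis using 2 q lam_le_iff binD_slope
      by (simp add: q_def[symmetric] mult_nonpos_nonpos)
  qed
qed

lemma tangent_slope_nu: "binD \<alpha> (lam \<alpha> \<beta>) - binD (1 - \<beta>) (lam \<alpha> \<beta>) = 0"
  using binD_slope[OF lam_gt_0 lam_lt_1] log_odds_lam by simp

lemma tangent_rate_self:
  assumes "0 \<le> k" "k \<le> nu \<alpha> \<beta>"
  shows "tangent_rate \<alpha> \<beta> k k = ti_rate \<alpha> \<beta> k"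
proof (cases "k = 0")
  case True
  then show ?thesis
    by (simp add: tangent_rate_def ti_rate_def lambar_def binD_self binH_one_minus)
next
  case False
  define q where "q = lambar \<alpha> \<beta> k"
  have q: "0 < q" "q < 1" using lambar_strict_range[of k] assms False q_def by auto
  have "tangent_rate \<alpha> \<beta> k k = - k * binH \<alpha> - (1 - k) * binH \<beta>
      - ((1 - k) * (1 - \<beta>) + k * \<alpha>) * log 2 q - ((1 - k) * \<beta> + k * (1 - \<alpha>)) * log 2 (1 - q)"
    unfolding tangent_rate_def q_def[symmetric] using q \<alpha>_nonneg \<alpha>_le_1 \<beta>_nonneg \<beta>_le_1
    by (simp add: binD_eq binH_one_minus algebra_simps)
  moreover have "(1 - k) * (1 - \<beta>) + k * \<alpha> = q" "(1 - k) * \<beta> + k * (1 - \<alpha>) = 1 - q"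
    unfolding q_def lambar_def by (simp_all add: algebra_simps)
  ultimately show ?thesis unfolding ti_rate_def q_def[symmetric] binH_eq[of q] by simp
qed

lemma tangent_rate_le:
  assumes "0 \<le> \<kappa>" "0 \<le> x" "x \<le> \<kappa>"
  shows "tangent_rate \<alpha> \<beta> (min \<kappa> (nu \<alpha> \<beta>)) x \<le> ti_rate \<alpha> \<beta> (min \<kappa> (nu \<alpha> \<beta>))"
proof -
  define k where "k = min \<kappa> (nu \<alpha> \<beta>)"
  have k: "0 \<le> k" "k \<le> nu \<alpha> \<beta>" using assms nu_range k_def by auto
  have affine: "tangent_rate \<alpha> \<beta> k x = ti_rate \<alpha> \<beta> k
      + (x - k) * (binD \<alpha> (lambar \<alpha> \<beta> k) - binD (1 - \<beta>) (lambar \<alpha> \<beta> k))"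
    using tangent_rate_self[OF k] unfolding tangent_rate_def by (simp add: algebra_simps)
  consider "\<kappa> \<le> nu \<alpha> \<beta>" "k = 0" | "\<kappa> \<le> nu \<alpha> \<beta>" "0 < k" | "nu \<alpha> \<beta> < \<kappa>"
    using k by (fastforce simp: k_def)
  then have "tangent_rate \<alpha> \<beta> k x \<le> ti_rate \<alpha> \<beta> k"
  proof cases
    case 1
    then show ?thesis using affine assms by (simp add: k_def)
  next
    case 2
    then show ?thesis using affine tangent_slope_nonneg[of k] k assms
      by (simp add: k_def mult_nonpos_nonneg)
  next
    case 3
    then show ?thesis using affine tangent_slope_nu lambar_nu by (simp add: k_def)
  qed
  then show ?thesis by (simp add: k_def)
qed

end

section \<open>Conditional mutual information\<close>

lemma prob_nonneg: "(\<And>s. s \<in> S \<Longrightarrow> 0 \<le> p s) \<Longrightarrow> 0 \<le> prob p S E"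
  unfolding prob_def by (intro sum_nonneg) auto

lemma prob_ge_member: "finite S \<Longrightarrow> (\<And>s. s \<in> S \<Longrightarrow> 0 \<le> p s) \<Longrightarrow> s \<in> S \<Longrightarrow> E s \<Longrightarrow> p s \<le> prob p S E"
  unfolding prob_def by (rule member_le_sum) auto

lemma prob_indicator: "finite S \<Longrightarrow> prob p S E = (\<Sum>s\<in>S. p s * (if E s then 1 else 0))"
  unfolding prob_def by (simp add: sum.inter_filter if_distrib cong: if_cong)

lemma prob_cong: "(\<And>s. s \<in> S \<Longrightarrow> E s = E' s) \<Longrightarrow> prob p S E = prob p S E'"
  unfolding prob_def by (rule arg_cong[where f="sum p"]) auto

lemma prob_split:
  "finite S \<Longrightarrow> prob p S E = prob p S (\<lambda>t. E t \<and> P t) + prob p S (\<lambda>t. E t \<and> \<not> P t)"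
  unfolding prob_indicator by (simp add: sum.distrib[symmetric] cong: if_cong) (rule sum.cong, auto)

lemma sum_prob_fibres: "finite S \<Longrightarrow> (\<Sum>z\<in>Z ` S. prob p S (\<lambda>s. Z s = z)) = sum p S"
  unfolding prob_def by (subst sum.image_gen[of S p Z]) simp_all

lemma cmi_eq_expectation:
  assumes fin: "finite S"
  shows "cmi p S X Y Z = (\<Sum>s\<in>S. p s * log 2 (prob p S (\<lambda>t. X t = X s \<and> Y t = Y s \<and> Z t = Z s)
            * prob p S (\<lambda>t. Z t = Z s) / (prob p S (\<lambda>t. X t = X s \<and> Z t = Z s)
            * prob p S (\<lambda>t. Y t = Y s \<and> Z t = Z s))))"
proof -
  define P where "P x y z = prob p S (\<lambda>s. X s = x \<and> Y s = y \<and> Z s = z)" for x y z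
  define L where "L x y z = log 2 (P x y z * prob p S (\<lambda>s. Z s = z) /
      (prob p S (\<lambda>s. X s = x \<and> Z s = z) * prob p S (\<lambda>s. Y s = y \<and> Z s = z)))" for x y z
  define g where "g t = (if P (fst t) (fst (snd t)) (snd (snd t)) = 0 then 0
      else P (fst t) (fst (snd t)) (snd (snd t)) * L (fst t) (fst (snd t)) (snd (snd t)))" for t
  define XYZ where "XYZ s = (X s, Y s, Z s)" for s
  have "cmi p S X Y Z = (\<Sum>t\<in>X ` S \<times> Y ` S \<times> Z ` S. g t)"
    unfolding cmi_def g_def P_def L_def Let_def by (simp add: sum.cartesian_product case_prod_beta)
  also have "\<dots> = (\<Sum>t\<in>XYZ ` S. g t)"
  proof (rule sum.mono_neutral_right)
    show "\<forall>t\<in>X ` S \<times> Y ` S \<times> Z ` S - XYZ ` S. g t = 0"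
    proof
      fix t assume t: "t \<in> X ` S \<times> Y ` S \<times> Z ` S - XYZ ` S"
      then have "{s\<in>S. X s = fst t \<and> Y s = fst (snd t) \<and> Z s = snd (snd t)} = {}"
        by (auto simp: XYZ_def image_iff prod_eq_iff)
      then have "P (fst t) (fst (snd t)) (snd (snd t)) = 0" unfolding P_def prob_def by (simp only: sum.empty)
      then show "g t = 0" by (simp add: g_def)
    qed
  qed (use fin in \<open>auto simp: XYZ_def\<close>)
  also have "\<dots> = (\<Sum>t\<in>XYZ ` S. \<Sum>s\<in>{s\<in>S. XYZ s = t}. p s * L (X s) (Y s) (Z s))"
  proof (rule sum.cong[OF refl])
    fix t
    have fibre: "{s\<in>S. XYZ s = t} = {s\<in>S. X s = fst t \<and> Y s = fst (snd t) \<and> Z s = snd (snd t)}"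
      by (auto simp: XYZ_def)
    have "(\<Sum>s\<in>{s\<in>S. XYZ s = t}. p s * L (X s) (Y s) (Z s))
        = (\<Sum>s\<in>{s\<in>S. XYZ s = t}. p s) * L (fst t) (fst (snd t)) (snd (snd t))"
      unfolding sum_distrib_right by (rule sum.cong) (auto simp: XYZ_def)
    then show "g t = (\<Sum>s\<in>{s\<in>S. XYZ s = t}. p s * L (X s) (Y s) (Z s))"
      unfolding g_def P_def prob_def fibre by simp
  qed
  also have "\<dots> = (\<Sum>s\<in>S. p s * L (X s) (Y s) (Z s))"
    by (rule sum.image_gen[OF fin, symmetric])
  finally show ?thesis unfolding L_def P_def .
qed

lemma cmi_eq_expected_log_kernel:
  assumes fin: "finite S" and nn: "\<And>s. s \<in> S \<Longrightarrow> 0 \<le> p s"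
    and W: "\<And>s. s \<in> S \<Longrightarrow> prob p S (\<lambda>t. X t = X s \<and> Y t = Y s \<and> Z t = Z s)
                 = prob p S (\<lambda>t. X t = X s \<and> Z t = Z s) * W s"
  shows "cmi p S X Y Z = (\<Sum>s\<in>S. p s * log 2 (W s * prob p S (\<lambda>t. Z t = Z s)
            / prob p S (\<lambda>t. Y t = Y s \<and> Z t = Z s)))"
  unfolding cmi_eq_expectation[OF fin]
proof (rule sum.cong[OF refl])
  fix s assume s: "s \<in> S"
  define Pxz where "Pxz = prob p S (\<lambda>t. X t = X s \<and> Z t = Z s)"
  show "p s * log 2 (prob p S (\<lambda>t. X t = X s \<and> Y t = Y s \<and> Z t = Z s) * prob p S (\<lambda>t. Z t = Z s)
          / (Pxz * prob p S (\<lambda>t. Y t = Y s \<and> Z t = Z s)))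
      = p s * log 2 (W s * prob p S (\<lambda>t. Z t = Z s) / prob p S (\<lambda>t. Y t = Y s \<and> Z t = Z s))"
  proof (cases "p s = 0")
    case False
    then have "0 < p s" using nn[OF s] by simp
    moreover have "p s \<le> Pxz * W s"
      unfolding Pxz_def W[OF s, symmetric] by (rule prob_ge_member) (use fin nn s in auto)
    ultimately have "Pxz \<noteq> 0" by auto
    then show ?thesis unfolding W[OF s, folded Pxz_def] by simp
  qed simp
qed

lemma expected_kernel_ratio_le_1:
  assumes fin: "finite S" and nn: "\<And>s. s \<in> S \<Longrightarrow> 0 \<le> p s" and tot: "sum p S = 1"
    and rnn: "\<And>z y. 0 \<le> r z y" and rs: "\<And>z. (\<Sum>y\<in>Y ` S. r z y) \<le> 1"
  shows "(\<Sum>s\<in>S. p s * (r (Z s) (Y s) * prob p S (\<lambda>t. Z t = Z s)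
            / prob p S (\<lambda>t. Y t = Y s \<and> Z t = Z s))) \<le> 1"
proof -
  define Pz where "Pz z = prob p S (\<lambda>t. Z t = z)" for z
  define Pyz where "Pyz yz = prob p S (\<lambda>t. Y t = fst yz \<and> Z t = snd yz)" for yz
  define f where "f yz = r (snd yz) (fst yz) * Pz (snd yz) / Pyz yz" for yz
  have Pz_nonneg: "0 \<le> Pz z" for z unfolding Pz_def using nn by (rule prob_nonneg)
  have "(\<Sum>s\<in>S. p s * (r (Z s) (Y s) * prob p S (\<lambda>t. Z t = Z s) / prob p S (\<lambda>t. Y t = Y s \<and> Z t = Z s)))
      = (\<Sum>t\<in>(\<lambda>s. (Y s, Z s)) ` S. \<Sum>s\<in>{s\<in>S. (Y s, Z s) = t}. p s * f t)"
    unfolding f_def Pz_def Pyz_def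
    by (subst sum.image_gen[OF fin, of _ "\<lambda>s. (Y s, Z s)"]) (rule sum.cong[OF refl], rule sum.cong, auto)
  also have "\<dots> = (\<Sum>t\<in>(\<lambda>s. (Y s, Z s)) ` S. Pyz t * f t)"
  proof (rule sum.cong[OF refl])
    fix t
    have "{s\<in>S. (Y s, Z s) = t} = {s\<in>S. Y s = fst t \<and> Z s = snd t}" by auto
    then show "(\<Sum>s\<in>{s\<in>S. (Y s, Z s) = t}. p s * f t) = Pyz t * f t"
      unfolding Pyz_def prob_def by (simp add: sum_distrib_right)
  qed
  also have "\<dots> \<le> (\<Sum>t\<in>(\<lambda>s. (Y s, Z s)) ` S. r (snd t) (fst t) * Pz (snd t))"
    by (rule sum_mono) (use rnn Pz_nonneg in \<open>auto simp: f_def\<close>)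
  also have "\<dots> \<le> (\<Sum>t\<in>Y ` S \<times> Z ` S. r (snd t) (fst t) * Pz (snd t))"
    by (rule sum_mono2) (use fin rnn Pz_nonneg in auto)
  also have "\<dots> = (\<Sum>y\<in>Y ` S. \<Sum>z\<in>Z ` S. r z y * Pz z)"
    by (subst sum.cartesian_product) (simp add: case_prod_beta)
  also have "\<dots> = (\<Sum>z\<in>Z ` S. Pz z * (\<Sum>y\<in>Y ` S. r z y))"
    by (subst sum.swap) (simp add: sum_distrib_left mult.commute)
  also have "\<dots> \<le> (\<Sum>z\<in>Z ` S. Pz z)"
    by (rule sum_mono) (use Pz_nonneg rs in \<open>auto intro: mult_left_le\<close>)
  also have "\<dots> = 1" unfolding Pz_def using sum_prob_fibres[OF fin, where Z=Z and p=p] tot by simp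
  finally show ?thesis .
qed

text \<open>Gibbs' inequality: replacing the conditional law of Y given Z by any subprobability
  kernel r can only increase the expected log ratio.\<close>

lemma cmi_le_expected_log_ratio:
  assumes fin: "finite S" and nn: "\<And>s. s \<in> S \<Longrightarrow> 0 \<le> p s" and tot: "sum p S = 1"
    and W: "\<And>s. s \<in> S \<Longrightarrow> prob p S (\<lambda>t. X t = X s \<and> Y t = Y s \<and> Z t = Z s)
                 = prob p S (\<lambda>t. X t = X s \<and> Z t = Z s) * W s"
    and rnn: "\<And>z y. 0 \<le> r z y" and rs: "\<And>z. (\<Sum>y\<in>Y ` S. r z y) \<le> 1"
    and rpos: "\<And>s. s \<in> S \<Longrightarrow> 0 < p s \<Longrightarrow> 0 < W s \<Longrightarrow> 0 < r (Z s) (Y s)"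
  shows "cmi p S X Y Z \<le> (\<Sum>s\<in>S. p s * log 2 (W s / r (Z s) (Y s)))"
proof -
  define Pz where "Pz s = prob p S (\<lambda>t. Z t = Z s)" for s
  define Pyz where "Pyz s = prob p S (\<lambda>t. Y t = Y s \<and> Z t = Z s)" for s
  define v where "v s = r (Z s) (Y s) * Pz s / Pyz s" for s
  have pointwise: "p s * log 2 (W s * Pz s / Pyz s)
      \<le> p s * log 2 (W s / r (Z s) (Y s)) + p s * (v s - 1) / ln 2" if s: "s \<in> S" for s
  proof (cases "p s = 0")
    case False
    then have ps: "0 < p s" using nn s by force
    have "p s \<le> prob p S (\<lambda>t. X t = X s \<and> Z t = Z s) * W s"
      unfolding W[OF s, symmetric] by (rule prob_ge_member) (use fin nn s in auto)
    moreover have "0 \<le> prob p S (\<lambda>t. X t = X s \<and> Z t = Z s)"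
      by (rule prob_nonneg) (use nn in auto)
    ultimately have Wpos: "0 < W s" using ps by (smt (verit) zero_less_mult_iff)
    have "p s \<le> Pyz s" "p s \<le> Pz s"
      unfolding Pyz_def Pz_def by (rule prob_ge_member; use fin nn s in auto)+
    then have Pyz: "0 < Pyz s" and Pz: "0 < Pz s" using ps by auto
    have r: "0 < r (Z s) (Y s)" by (rule rpos[OF s ps Wpos])
    then have v: "0 < v s" unfolding v_def using Pyz Pz by simp
    have ratio: "W s * Pz s / Pyz s = W s / r (Z s) (Y s) * v s"
      unfolding v_def using r by simp
    have "log 2 (W s * Pz s / Pyz s) = log 2 (W s / r (Z s) (Y s)) + log 2 (v s)"
      unfolding ratio by (rule log_mult_pos) (use Wpos r v in simp_all)
    moreover have "log 2 (v s) \<le> (v s - 1) / ln 2"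
      unfolding log_def using ln_le_minus_one[OF v] by (simp add: divide_right_mono)
    ultimately have "log 2 (W s * Pz s / Pyz s) \<le> log 2 (W s / r (Z s) (Y s)) + (v s - 1) / ln 2"
      by linarith
    then have "p s * log 2 (W s * Pz s / Pyz s) \<le> p s * (log 2 (W s / r (Z s) (Y s)) + (v s - 1) / ln 2)"
      using ps by (intro mult_left_mono) auto
    then show ?thesis by (simp add: distrib_left)
  qed simp
  have "cmi p S X Y Z = (\<Sum>s\<in>S. p s * log 2 (W s * Pz s / Pyz s))"
    unfolding Pz_def Pyz_def by (rule cmi_eq_expected_log_kernel[OF fin]) (simp_all add: nn W)
  also have "\<dots> \<le> (\<Sum>s\<in>S. p s * log 2 (W s / r (Z s) (Y s)) + p s * (v s - 1) / ln 2)"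
    by (rule sum_mono) (rule pointwise)
  also have "\<dots> = (\<Sum>s\<in>S. p s * log 2 (W s / r (Z s) (Y s))) + ((\<Sum>s\<in>S. p s * v s) - sum p S) / ln 2"
    by (simp add: sum.distrib sum_divide_distrib[symmetric] sum_subtractf right_diff_distrib)
  also have "\<dots> \<le> (\<Sum>s\<in>S. p s * log 2 (W s / r (Z s) (Y s)))"
  proof -
    have "(\<Sum>s\<in>S. p s * v s) \<le> 1"
      unfolding v_def Pz_def Pyz_def by (rule expected_kernel_ratio_le_1) (use fin nn tot rnn rs in auto)
    then show ?thesis using tot by (simp add: divide_nonpos_pos)
  qed
  finally show ?thesis .
qed

lemma cmi_eq_expected_log_ratio:
  assumes fin: "finite S" and nn: "\<And>s. s \<in> S \<Longrightarrow> 0 \<le> p s"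
    and W: "\<And>s. s \<in> S \<Longrightarrow> prob p S (\<lambda>t. X t = X s \<and> Y t = Y s \<and> Z t = Z s)
                 = prob p S (\<lambda>t. X t = X s \<and> Z t = Z s) * W s"
    and R: "\<And>s. s \<in> S \<Longrightarrow> prob p S (\<lambda>t. Y t = Y s \<and> Z t = Z s)
                 = prob p S (\<lambda>t. Z t = Z s) * r (Z s) (Y s)"
  shows "cmi p S X Y Z = (\<Sum>s\<in>S. p s * log 2 (W s / r (Z s) (Y s)))"
proof -
  have pointwise: "p s * log 2 (W s * prob p S (\<lambda>t. Z t = Z s) / prob p S (\<lambda>t. Y t = Y s \<and> Z t = Z s))
      = p s * log 2 (W s / r (Z s) (Y s))" if s: "s \<in> S" for s
  proof (cases "p s = 0")
    case False
    have "p s \<le> prob p S (\<lambda>t. Z t = Z s)" by (rule prob_ge_member) (use fin nn s in auto)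
    then have "0 < prob p S (\<lambda>t. Z t = Z s)" using False nn[OF s] by simp
    then show ?thesis unfolding R[OF s] by simp
  qed simp
  have "cmi p S X Y Z = (\<Sum>s\<in>S. p s * log 2 (W s * prob p S (\<lambda>t. Z t = Z s)
      / prob p S (\<lambda>t. Y t = Y s \<and> Z t = Z s)))"
    by (rule cmi_eq_expected_log_kernel[OF fin]) (simp_all add: nn W)
  also have "\<dots> = (\<Sum>s\<in>S. p s * log 2 (W s / r (Z s) (Y s)))"
    by (rule sum.cong[OF refl]) (rule pointwise)
  finally show ?thesis .
qed

section \<open>Feedback policies\<close>

definition len_pairs :: "nat \<Rightarrow> (bool list \<times> bool list) set" where
  "len_pairs k = {(as, bs). length as = k \<and> length bs = k}"

text \<open>Joint law of the first k inputs and outputs, i.e. of (A^{k-1}, B^{k-1}).\<close>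

definition prefix_joint :: "real \<Rightarrow> real \<Rightarrow> bool \<Rightarrow> policy \<Rightarrow> nat \<Rightarrow> bool list \<Rightarrow> bool list \<Rightarrow> real" where
  "prefix_joint a b b0 \<pi> k as bs =
     (\<Prod>j<k. \<pi> j (take j as) (take j bs) (as ! j) * Qch a b (as ! j) (prevb b0 bs j) (bs ! j))"

lemma joint_eq_prefix_joint: "joint a b b0 \<pi> n s = prefix_joint a b b0 \<pi> (Suc n) (fst s) (snd s)"
  unfolding joint_def prefix_joint_def lessThan_Suc_atMost ..

lemma seqs_eq_len_pairs: "seqs n = len_pairs (Suc n)"
  unfolding seqs_def len_pairs_def ..

lemma finite_len_pairs: "finite (len_pairs k)"
proof -
  have "len_pairs k = {xs. set xs \<subseteq> UNIV \<and> length xs = k} \<times> {xs. set xs \<subseteq> UNIV \<and> length xs = k}"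
    unfolding len_pairs_def by auto
  then show ?thesis using finite_lists_length_eq[of "UNIV :: bool set" k] by simp
qed

lemma finite_seqs: "finite (seqs n)"
  unfolding seqs_eq_len_pairs by (rule finite_len_pairs)

lemma len_pairs_0: "len_pairs 0 = {([], [])}"
  unfolding len_pairs_def by auto

lemma len_pairs_Suc:
  "len_pairs (Suc k) = (\<lambda>(s, xy). (fst s @ [fst xy], snd s @ [snd xy])) ` (len_pairs k \<times> UNIV)"
proof
  show "len_pairs (Suc k) \<subseteq> (\<lambda>(s, xy). (fst s @ [fst xy], snd s @ [snd xy])) ` (len_pairs k \<times> UNIV)"
  proof
    fix t assume "t \<in> len_pairs (Suc k)"
    then obtain as bs where t: "t = (as, bs)" "length as = Suc k" "length bs = Suc k"
      unfolding len_pairs_def by auto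
    then have "as = butlast as @ [last as]" "bs = butlast bs @ [last bs]"
      by (metis append_butlast_last_id list.size(3) nat.distinct(1))+
    moreover have "(butlast as, butlast bs) \<in> len_pairs k" using t unfolding len_pairs_def by auto
    ultimately show "t \<in> (\<lambda>(s, xy). (fst s @ [fst xy], snd s @ [snd xy])) ` (len_pairs k \<times> UNIV)"
      using t by (intro image_eqI[of _ _ "((butlast as, butlast bs), (last as, last bs))"]) auto
  qed
qed (auto simp: len_pairs_def)

lemma prevb_snoc: "j \<le> length bs \<Longrightarrow> prevb b0 (bs @ [y]) j = prevb b0 bs j"
  unfolding prevb_def by (auto simp: nth_append)

lemma prevb_take: "j \<le> k \<Longrightarrow> prevb b0 (take k bs) j = prevb b0 bs j"
  unfolding prevb_def by auto

lemma prefix_joint_snoc: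
  assumes "length as = k" "length bs = k"
  shows "prefix_joint a b b0 \<pi> (Suc k) (as @ [x]) (bs @ [y])
       = prefix_joint a b b0 \<pi> k as bs * \<pi> k as bs x * Qch a b x (prevb b0 bs k) y"
proof -
  have "prefix_joint a b b0 \<pi> k (as @ [x]) (bs @ [y]) = prefix_joint a b b0 \<pi> k as bs"
    unfolding prefix_joint_def
    by (rule prod.cong[OF refl]) (use assms in \<open>auto simp: nth_append prevb_snoc\<close>)
  then show ?thesis
    using assms by (simp add: prefix_joint_def nth_append prevb_snoc mult.assoc)
qed

lemma sum_UNIV_pair: "(\<Sum>xy\<in>UNIV. f xy) = (\<Sum>x\<in>UNIV. \<Sum>y\<in>UNIV. f (x, y))"
  by (subst UNIV_Times_UNIV[symmetric]) (simp only: sum.cartesian_product case_prod_eta)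

lemma sum_prefix_joint_Suc:
  "(\<Sum>s\<in>len_pairs (Suc k). prefix_joint a b b0 \<pi> (Suc k) (fst s) (snd s) * F s) =
   (\<Sum>s\<in>len_pairs k. prefix_joint a b b0 \<pi> k (fst s) (snd s) *
      (\<Sum>x\<in>UNIV. \<Sum>y\<in>UNIV. \<pi> k (fst s) (snd s) x * Qch a b x (prevb b0 (snd s) k) y
                              * F (fst s @ [x], snd s @ [y])))"
proof -
  have inj: "inj_on (\<lambda>(s, xy). (fst s @ [fst xy], snd s @ [snd xy])) A" for A
    by (auto simp: inj_on_def)
  have "(\<Sum>s\<in>len_pairs (Suc k). prefix_joint a b b0 \<pi> (Suc k) (fst s) (snd s) * F s) =
    (\<Sum>s\<in>len_pairs k. \<Sum>xy\<in>UNIV. prefix_joint a b b0 \<pi> (Suc k) (fst s @ [fst xy]) (snd s @ [snd xy])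
        * F (fst s @ [fst xy], snd s @ [snd xy]))"
    unfolding len_pairs_Suc by (subst sum.reindex[OF inj]) (simp add: sum.cartesian_product case_prod_beta)
  also have "\<dots> = (\<Sum>s\<in>len_pairs k. prefix_joint a b b0 \<pi> k (fst s) (snd s) *
      (\<Sum>x\<in>UNIV. \<Sum>y\<in>UNIV. \<pi> k (fst s) (snd s) x * Qch a b x (prevb b0 (snd s) k) y
                              * F (fst s @ [x], snd s @ [y])))"
  proof (rule sum.cong[OF refl])
    fix s assume "s \<in> len_pairs k"
    then have "length (fst s) = k" "length (snd s) = k" unfolding len_pairs_def by auto
    then show "(\<Sum>xy\<in>UNIV. prefix_joint a b b0 \<pi> (Suc k) (fst s @ [fst xy]) (snd s @ [snd xy])
        * F (fst s @ [fst xy], snd s @ [snd xy])) = prefix_joint a b b0 \<pi> k (fst s) (snd s) *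
      (\<Sum>x\<in>UNIV. \<Sum>y\<in>UNIV. \<pi> k (fst s) (snd s) x * Qch a b x (prevb b0 (snd s) k) y
                              * F (fst s @ [x], snd s @ [y]))"
      by (simp add: prefix_joint_snoc sum_UNIV_pair sum_distrib_left mult.assoc)
  qed
  finally show ?thesis .
qed

lemma sum_Qch: "(\<Sum>y\<in>UNIV. Qch a b x p y) = 1"
  unfolding UNIV_bool by (simp add: Qch_def)

lemma sum_policy: "valid_policy \<pi> \<Longrightarrow> (\<Sum>x\<in>UNIV. \<pi> k as bs x) = 1"
  unfolding valid_policy_def UNIV_bool by (simp add: add.commute)

lemma sum_Qch_out: "(\<Sum>x\<in>UNIV. \<Sum>y\<in>UNIV. w x * Qch a b x p y * c x) = (\<Sum>x\<in>UNIV. w x * c x)"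
proof (rule sum.cong[OF refl])
  fix x
  have "(\<Sum>y\<in>UNIV. w x * Qch a b x p y * c x) = w x * c x * (\<Sum>y\<in>UNIV. Qch a b x p y)"
    by (simp add: sum_distrib_left mult_ac)
  then show "(\<Sum>y\<in>UNIV. w x * Qch a b x p y * c x) = w x * c x" by (simp add: sum_Qch)
qed

lemma sum_policy_Qch_const:
  "valid_policy \<pi> \<Longrightarrow> (\<Sum>x\<in>UNIV. \<Sum>y\<in>UNIV. \<pi> k as bs x * Qch a b x p y * c) = c"
  using sum_Qch_out[of "\<pi> k as bs" a b p "\<lambda>_. c"] sum_policy[of \<pi> k as bs]
  by (simp add: sum_distrib_right[symmetric])

lemma sum_prefix_joint:
  assumes "valid_policy \<pi>"
  shows "(\<Sum>s\<in>len_pairs k. prefix_joint a b b0 \<pi> k (fst s) (snd s)) = 1"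
proof (induction k)
  case 0
  then show ?case by (simp add: len_pairs_0 prefix_joint_def)
next
  case (Suc k)
  then show ?case
    using sum_prefix_joint_Suc[where F="\<lambda>_. 1"] sum_policy_Qch_const[OF assms, where c=1] by simp
qed

lemma sum_prefix_joint_take:
  assumes \<pi>: "valid_policy \<pi>" and "k \<le> m"
  shows "(\<Sum>s\<in>len_pairs m. prefix_joint a b b0 \<pi> m (fst s) (snd s) * F (take k (fst s), take k (snd s))) =
         (\<Sum>s\<in>len_pairs k. prefix_joint a b b0 \<pi> k (fst s) (snd s) * F s)"
  using \<open>k \<le> m\<close>
proof (induction m)
  case 0
  then show ?case by (simp add: len_pairs_0)
next
  case (Suc m)
  show ?case
  proof (cases "k = Suc m")
    case True
    then show ?thesis by (intro sum.cong refl) (auto simp: len_pairs_def)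
  next
    case False
    then have "k \<le> m" using Suc.prems by simp
    have "(\<Sum>s\<in>len_pairs (Suc m). prefix_joint a b b0 \<pi> (Suc m) (fst s) (snd s) * F (take k (fst s), take k (snd s)))
        = (\<Sum>s\<in>len_pairs m. prefix_joint a b b0 \<pi> m (fst s) (snd s) * F (take k (fst s), take k (snd s)))"
      unfolding sum_prefix_joint_Suc
      by (intro sum.cong refl) (use \<open>k \<le> m\<close> in \<open>auto simp: len_pairs_def sum_policy_Qch_const[OF \<pi>]\<close>)
    also have "\<dots> = (\<Sum>s\<in>len_pairs k. prefix_joint a b b0 \<pi> k (fst s) (snd s) * F s)"
      by (rule Suc.IH[OF \<open>k \<le> m\<close>])
    finally show ?thesis .
  qed
qed

definition output_prob :: "real \<Rightarrow> real \<Rightarrow> bool \<Rightarrow> policy \<Rightarrow> nat \<Rightarrow> bool list \<Rightarrow> real" where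
  "output_prob a b b0 \<pi> k zb =
     (\<Sum>s\<in>len_pairs k. prefix_joint a b b0 \<pi> k (fst s) (snd s) * (if snd s = zb then 1 else 0))"

definition cost_prob :: "real \<Rightarrow> real \<Rightarrow> bool \<Rightarrow> policy \<Rightarrow> nat \<Rightarrow> real" where
  "cost_prob a b b0 \<pi> i =
     (\<Sum>s\<in>len_pairs i. prefix_joint a b b0 \<pi> i (fst s) (snd s) * \<pi> i (fst s) (snd s) (prevb b0 (snd s) i))"

context
  fixes a b :: real and b0 :: bool and \<pi> :: policy and n :: nat
  assumes \<pi>: "valid_policy \<pi>"
begin

lemma expectation_take:
  "k \<le> Suc n \<Longrightarrow> (\<Sum>s\<in>seqs n. joint a b b0 \<pi> n s * F (take k (fst s), take k (snd s))) =
         (\<Sum>s\<in>len_pairs k. prefix_joint a b b0 \<pi> k (fst s) (snd s) * F s)"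
  unfolding seqs_eq_len_pairs joint_eq_prefix_joint by (rule sum_prefix_joint_take[OF \<pi>])

lemma expectation_step:
  assumes "i \<le> n"
  shows "(\<Sum>s\<in>seqs n. joint a b b0 \<pi> n s * G (fst s ! i) (prevb b0 (snd s) i) (snd s ! i)) =
    (\<Sum>s\<in>len_pairs i. prefix_joint a b b0 \<pi> i (fst s) (snd s) *
      (\<Sum>x\<in>UNIV. \<Sum>y\<in>UNIV. \<pi> i (fst s) (snd s) x * Qch a b x (prevb b0 (snd s) i) y
                              * G x (prevb b0 (snd s) i) y))"
proof -
  have "(\<Sum>s\<in>seqs n. joint a b b0 \<pi> n s * G (fst s ! i) (prevb b0 (snd s) i) (snd s ! i)) =
    (\<Sum>s\<in>seqs n. joint a b b0 \<pi> n s * (\<lambda>u. G (fst u ! i) (prevb b0 (snd u) i) (snd u ! i))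
                                        (take (Suc i) (fst s), take (Suc i) (snd s)))"
    by (simp add: prevb_take)
  also have "\<dots> = (\<Sum>s\<in>len_pairs (Suc i). prefix_joint a b b0 \<pi> (Suc i) (fst s) (snd s)
                      * G (fst s ! i) (prevb b0 (snd s) i) (snd s ! i))"
    using assms by (intro expectation_take) auto
  also have "\<dots> = (\<Sum>s\<in>len_pairs i. prefix_joint a b b0 \<pi> i (fst s) (snd s) *
      (\<Sum>x\<in>UNIV. \<Sum>y\<in>UNIV. \<pi> i (fst s) (snd s) x * Qch a b x (prevb b0 (snd s) i) y
                              * G x (prevb b0 (snd s) i) y))"
    unfolding sum_prefix_joint_Suc
    by (intro sum.cong refl) (auto simp: len_pairs_def nth_append prevb_snoc)
  finally show ?thesis .
qed

lemma prob_prefix: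
  assumes "k \<le> Suc n" "length xa = k" "length yb = k"
  shows "prob (joint a b b0 \<pi> n) (seqs n) (\<lambda>t. take k (fst t) = xa \<and> take k (snd t) = yb)
       = prefix_joint a b b0 \<pi> k xa yb"
proof -
  have "prob (joint a b b0 \<pi> n) (seqs n) (\<lambda>t. take k (fst t) = xa \<and> take k (snd t) = yb)
     = (\<Sum>s\<in>seqs n. joint a b b0 \<pi> n s * (\<lambda>u. if u = (xa, yb) then 1 else 0) (take k (fst s), take k (snd s)))"
    unfolding prob_indicator[OF finite_seqs] by simp
  also have "\<dots> = (\<Sum>s\<in>len_pairs k. prefix_joint a b b0 \<pi> k (fst s) (snd s) * (if s = (xa, yb) then 1 else 0))"
    by (rule expectation_take[OF assms(1)])
  also have "\<dots> = (\<Sum>s\<in>len_pairs k. if s = (xa, yb) then prefix_joint a b b0 \<pi> k (fst s) (snd s) else 0)"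
    by (rule sum.cong) auto
  also have "\<dots> = prefix_joint a b b0 \<pi> k xa yb"
    using assms by (subst sum.delta[OF finite_len_pairs]) (auto simp: len_pairs_def)
  finally show ?thesis .
qed

lemma prob_output_prefix:
  "k \<le> Suc n \<Longrightarrow> prob (joint a b b0 \<pi> n) (seqs n) (\<lambda>t. take k (snd t) = yb) = output_prob a b b0 \<pi> k yb"
  unfolding prob_indicator[OF finite_seqs] output_prob_def
  using expectation_take[where F="\<lambda>u. if snd u = yb then 1 else 0"] by simp

lemma output_prob_snoc:
  assumes "length zb = i"
  shows "output_prob a b b0 \<pi> (Suc i) (zb @ [y]) = (\<Sum>s\<in>len_pairs i. prefix_joint a b b0 \<pi> i (fst s) (snd s) *
     (if snd s = zb then (\<Sum>x\<in>UNIV. \<pi> i (fst s) (snd s) x * Qch a b x (prevb b0 zb i) y) else 0))"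
  unfolding output_prob_def sum_prefix_joint_Suc
proof (intro sum.cong refl)
  fix s assume "s \<in> len_pairs i"
  have "(\<Sum>x\<in>UNIV. \<Sum>y'\<in>UNIV. \<pi> i (fst s) (snd s) x * Qch a b x (prevb b0 (snd s) i) y' *
          (if snd (fst s @ [x], snd s @ [y']) = zb @ [y] then 1 else 0))
      = (\<Sum>x\<in>UNIV. \<Sum>y'\<in>UNIV. if y' = y then (if snd s = zb
            then \<pi> i (fst s) (snd s) x * Qch a b x (prevb b0 zb i) y' else 0) else 0)"
    by (intro sum.cong refl) auto
  then show "prefix_joint a b b0 \<pi> i (fst s) (snd s) *
      (\<Sum>x\<in>UNIV. \<Sum>y'\<in>UNIV. \<pi> i (fst s) (snd s) x * Qch a b x (prevb b0 (snd s) i) y' *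
          (if snd (fst s @ [x], snd s @ [y']) = zb @ [y] then 1 else 0)) =
      prefix_joint a b b0 \<pi> i (fst s) (snd s) *
      (if snd s = zb then (\<Sum>x\<in>UNIV. \<pi> i (fst s) (snd s) x * Qch a b x (prevb b0 zb i) y) else 0)"
    by (simp add: sum.delta')
qed

lemma prob_input_output_step:
  assumes "i \<le> n" "length xa = Suc i" "length zb = i"
  shows "prob (joint a b b0 \<pi> n) (seqs n) (\<lambda>t. take (Suc i) (fst t) = xa \<and> snd t ! i = y \<and> take i (snd t) = zb)
    = prefix_joint a b b0 \<pi> i (take i xa) zb * \<pi> i (take i xa) zb (xa ! i) * Qch a b (xa ! i) (prevb b0 zb i) y"
proof -
  have "prob (joint a b b0 \<pi> n) (seqs n) (\<lambda>t. take (Suc i) (fst t) = xa \<and> snd t ! i = y \<and> take i (snd t) = zb)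
      = prob (joint a b b0 \<pi> n) (seqs n) (\<lambda>t. take (Suc i) (fst t) = xa \<and> take (Suc i) (snd t) = zb @ [y])"
  proof (rule prob_cong)
    fix t assume "t \<in> seqs n"
    then have "take (Suc i) (snd t) = take i (snd t) @ [snd t ! i]"
      using assms by (intro take_Suc_conv_app_nth) (auto simp: seqs_def)
    then show "(take (Suc i) (fst t) = xa \<and> snd t ! i = y \<and> take i (snd t) = zb) =
          (take (Suc i) (fst t) = xa \<and> take (Suc i) (snd t) = zb @ [y])" by auto
  qed
  also have "\<dots> = prefix_joint a b b0 \<pi> (Suc i) (take i xa @ [xa ! i]) (zb @ [y])"
    using assms by (subst prob_prefix) (auto simp: take_Suc_conv_app_nth[symmetric])
  also have "\<dots> = prefix_joint a b b0 \<pi> i (take i xa) zb * \<pi> i (take i xa) zb (xa ! i)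
                  * Qch a b (xa ! i) (prevb b0 zb i) y"
    using assms by (intro prefix_joint_snoc) auto
  finally show ?thesis .
qed

lemma prob_input_prefix:
  assumes "i \<le> n" "length xa = Suc i" "length zb = i"
  shows "prob (joint a b b0 \<pi> n) (seqs n) (\<lambda>t. take (Suc i) (fst t) = xa \<and> take i (snd t) = zb)
    = prefix_joint a b b0 \<pi> i (take i xa) zb * \<pi> i (take i xa) zb (xa ! i)"
proof -
  have "prob (joint a b b0 \<pi> n) (seqs n) (\<lambda>t. take (Suc i) (fst t) = xa \<and> take i (snd t) = zb)
     = (\<Sum>y\<in>UNIV. prob (joint a b b0 \<pi> n) (seqs n)
          (\<lambda>t. take (Suc i) (fst t) = xa \<and> snd t ! i = y \<and> take i (snd t) = zb))"
    unfolding UNIV_bool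
    by (subst prob_split[OF finite_seqs, where P="\<lambda>t. snd t ! i"])
       (simp add: add.commute, intro arg_cong2[where f="(+)"] prob_cong; auto)
  also have "\<dots> = prefix_joint a b b0 \<pi> i (take i xa) zb * \<pi> i (take i xa) zb (xa ! i)"
    unfolding prob_input_output_step[OF assms] by (simp add: sum_distrib_left[symmetric] sum_Qch)
  finally show ?thesis .
qed

lemma prob_channel_factor:
  assumes "i \<le> n" "s \<in> seqs n"
  shows "prob (joint a b b0 \<pi> n) (seqs n)
           (\<lambda>t. take (Suc i) (fst t) = take (Suc i) (fst s) \<and> snd t ! i = snd s ! i \<and> take i (snd t) = take i (snd s))
     = prob (joint a b b0 \<pi> n) (seqs n) (\<lambda>t. take (Suc i) (fst t) = take (Suc i) (fst s) \<and> take i (snd t) = take i (snd s))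
       * Qch a b (fst s ! i) (prevb b0 (snd s) i) (snd s ! i)"
proof -
  have "length (take (Suc i) (fst s)) = Suc i" "length (take i (snd s)) = i"
    using assms by (auto simp: seqs_def)
  note lengths = this
  show ?thesis
    unfolding prob_input_output_step[OF assms(1) lengths] prob_input_prefix[OF assms(1) lengths]
    using assms(1) by (simp add: prevb_take)
qed

lemma expected_cost:
  assumes "i \<le> n"
  shows "(\<Sum>s\<in>seqs n. joint a b b0 \<pi> n s * gamma (fst s ! i) (prevb b0 (snd s) i)) = cost_prob a b b0 \<pi> i"
proof -
  have "(\<Sum>x\<in>UNIV. \<pi> i as bs x * gamma x p) = \<pi> i as bs p" for as bs p
    by (cases p) (simp_all add: UNIV_bool gamma_def)
  then show ?thesis
    unfolding expectation_step[OF assms, where G="\<lambda>x p y. gamma x p"] cost_prob_def sum_Qch_out by simp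
qed

lemma avg_cost_eq: "avg_cost a b b0 \<pi> n = (\<Sum>i\<le>n. cost_prob a b b0 \<pi> i) / real (Suc n)"
  unfolding avg_cost_def by (simp add: expected_cost)

end

lemma PTI_pos: "0 < lambar a b k \<Longrightarrow> lambar a b k < 1 \<Longrightarrow> 0 < PTI a b k p y"
  unfolding PTI_def by simp

lemma sum_PTI_le_1:
  assumes "0 \<le> lambar a b k" "lambar a b k \<le> 1"
  shows "(\<Sum>y\<in>Y. PTI a b k p y) \<le> 1"
proof -
  have "(\<Sum>y\<in>Y. PTI a b k p y) \<le> (\<Sum>y\<in>UNIV. PTI a b k p y)"
    by (rule sum_mono2) (use assms in \<open>auto simp: PTI_def\<close>)
  also have "\<dots> = 1" unfolding UNIV_bool PTI_def by (cases p) auto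
  finally show ?thesis .
qed

lemma Qch_eq_PTI_0: "x \<noteq> p \<Longrightarrow> Qch a b x p y = PTI a b 0 p y"
  unfolding Qch_def PTI_def lambar_def by auto

lemma sum_Qch_log_ratio:
  "(\<Sum>y\<in>UNIV. Qch a b x p y * log 2 (Qch a b x p y / PTI a b k p y))
     = (if x = p then binD a (lambar a b k) else binD (1 - b) (lambar a b k))"
  unfolding UNIV_bool Qch_def PTI_def binD_def by (cases x; cases p) (auto simp: add.commute)

lemma sum_input_log_ratio:
  assumes "w True + w False = 1"
  shows "(\<Sum>x\<in>UNIV. w x * (\<Sum>y\<in>UNIV. Qch a b x p y * log 2 (Qch a b x p y / PTI a b k p y)))
       = tangent_rate a b k (w p)"
proof -
  have wn: "w (\<not> p) = 1 - w p" using assms by (cases p) auto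
  have mix: "(\<Sum>x\<in>UNIV. w x * (if x = p then A else B)) = w p * A + w (\<not> p) * B" for A B :: real
    by (cases p) (simp_all add: UNIV_bool add.commute)
  show ?thesis unfolding sum_Qch_log_ratio mix wn tangent_rate_def by (simp only: add.commute)
qed

context
  fixes a b :: real and b0 :: bool and \<pi> :: policy and n :: nat
  assumes \<pi>: "valid_policy \<pi>"
begin

lemma expected_log_ratio:
  assumes "i \<le> n"
  shows "(\<Sum>s\<in>seqs n. joint a b b0 \<pi> n s * log 2 (Qch a b (fst s ! i) (prevb b0 (snd s) i) (snd s ! i)
            / PTI a b k (prevb b0 (snd s) i) (snd s ! i)))
       = tangent_rate a b k (cost_prob a b b0 \<pi> i)"
proof -
  have "(\<Sum>s\<in>seqs n. joint a b b0 \<pi> n s * log 2 (Qch a b (fst s ! i) (prevb b0 (snd s) i) (snd s ! i)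
            / PTI a b k (prevb b0 (snd s) i) (snd s ! i)))
      = (\<Sum>s\<in>len_pairs i. prefix_joint a b b0 \<pi> i (fst s) (snd s)
           * tangent_rate a b k (\<pi> i (fst s) (snd s) (prevb b0 (snd s) i)))"
    unfolding expectation_step[OF \<pi> assms, where G="\<lambda>x p y. log 2 (Qch a b x p y / PTI a b k p y)"]
  proof (intro sum.cong refl arg_cong2[where f="(*)"])
    fix s
    have "\<pi> i (fst s) (snd s) True + \<pi> i (fst s) (snd s) False = 1"
      using \<pi> unfolding valid_policy_def by blast
    then show "(\<Sum>x\<in>UNIV. \<Sum>y\<in>UNIV. \<pi> i (fst s) (snd s) x * Qch a b x (prevb b0 (snd s) i) y
          * log 2 (Qch a b x (prevb b0 (snd s) i) y / PTI a b k (prevb b0 (snd s) i) y))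
        = tangent_rate a b k (\<pi> i (fst s) (snd s) (prevb b0 (snd s) i))"
      by (simp add: sum_input_log_ratio[symmetric] sum_distrib_left mult.assoc)
  qed
  also have "\<dots> = tangent_rate a b k (cost_prob a b b0 \<pi> i)"
    unfolding cost_prob_def by (rule tangent_rate_affine[OF sum_prefix_joint[OF \<pi>]])
  finally show ?thesis .
qed

end

context bssc
begin

context
  fixes b0 :: bool and \<pi> :: policy and n :: nat
  assumes \<pi>: "valid_policy \<pi>"
begin

lemma joint_nonneg: "0 \<le> joint \<alpha> \<beta> b0 \<pi> n s"
  unfolding joint_def using \<pi> Qch_nonneg
  by (intro prod_nonneg ballI mult_nonneg_nonneg) (auto simp: valid_policy_def)

lemma sum_joint: "sum (joint \<alpha> \<beta> b0 \<pi> n) (seqs n) = 1"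
  unfolding seqs_eq_len_pairs joint_eq_prefix_joint using sum_prefix_joint[OF \<pi>] by simp

lemma avg_cost_nonneg: "0 \<le> avg_cost \<alpha> \<beta> b0 \<pi> n"
  unfolding avg_cost_def using joint_nonneg
  by (intro mult_nonneg_nonneg sum_nonneg) (auto simp: gamma_def)

lemma DI_le_tangent_rate:
  assumes q: "0 \<le> lambar \<alpha> \<beta> k" "lambar \<alpha> \<beta> k \<le> 1"
    and pos: "\<And>i s. i \<le> n \<Longrightarrow> s \<in> seqs n \<Longrightarrow> 0 < joint \<alpha> \<beta> b0 \<pi> n s
       \<Longrightarrow> 0 < Qch \<alpha> \<beta> (fst s ! i) (prevb b0 (snd s) i) (snd s ! i)
       \<Longrightarrow> 0 < PTI \<alpha> \<beta> k (prevb b0 (snd s) i) (snd s ! i)"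
  shows "DI \<alpha> \<beta> b0 \<pi> n \<le> real (Suc n) * tangent_rate \<alpha> \<beta> k (avg_cost \<alpha> \<beta> b0 \<pi> n)"
proof -
  have "DI \<alpha> \<beta> b0 \<pi> n \<le> (\<Sum>i\<le>n. tangent_rate \<alpha> \<beta> k (cost_prob \<alpha> \<beta> b0 \<pi> i))"
    unfolding DI_def
  proof (rule sum_mono)
    fix i assume "i \<in> {..n}"
    then have i: "i \<le> n" by simp
    have "cmi (joint \<alpha> \<beta> b0 \<pi> n) (seqs n) (\<lambda>s. take (Suc i) (fst s)) (\<lambda>s. snd s ! i) (\<lambda>s. take i (snd s))
       \<le> (\<Sum>s\<in>seqs n. joint \<alpha> \<beta> b0 \<pi> n s * log 2 (Qch \<alpha> \<beta> (fst s ! i) (prevb b0 (snd s) i) (snd s ! i)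
             / PTI \<alpha> \<beta> k (prevb b0 (take i (snd s)) i) (snd s ! i)))"
      by (rule cmi_le_expected_log_ratio[where r="\<lambda>zb y. PTI \<alpha> \<beta> k (prevb b0 zb i) y"])
         (use q finite_seqs joint_nonneg sum_joint prob_channel_factor[OF \<pi> i] sum_PTI_le_1[OF q] pos[OF i]
          in \<open>auto simp: PTI_def prevb_take\<close>)
    also have "\<dots> = tangent_rate \<alpha> \<beta> k (cost_prob \<alpha> \<beta> b0 \<pi> i)"
      using expected_log_ratio[OF \<pi> i] by (simp add: prevb_take)
    finally show "cmi (joint \<alpha> \<beta> b0 \<pi> n) (seqs n) (\<lambda>s. take (Suc i) (fst s)) (\<lambda>s. snd s ! i) (\<lambda>s. take i (snd s))
       \<le> tangent_rate \<alpha> \<beta> k (cost_prob \<alpha> \<beta> b0 \<pi> i)" .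
  qed
  also have "\<dots> = real (Suc n) * (\<Sum>i\<le>n. 1 / real (Suc n) * tangent_rate \<alpha> \<beta> k (cost_prob \<alpha> \<beta> b0 \<pi> i))"
    by (simp add: sum_divide_distrib[symmetric])
  also have "\<dots> = real (Suc n) * tangent_rate \<alpha> \<beta> k (avg_cost \<alpha> \<beta> b0 \<pi> n)"
    by (subst tangent_rate_affine) (simp_all add: avg_cost_eq[OF \<pi>] sum_divide_distrib)
  finally show ?thesis .
qed

lemma zero_cost_support:
  assumes "avg_cost \<alpha> \<beta> b0 \<pi> n \<le> 0" "i \<le> n" "s \<in> seqs n" "0 < joint \<alpha> \<beta> b0 \<pi> n s"
  shows "fst s ! i \<noteq> prevb b0 (snd s) i"
proof
  assume costly: "fst s ! i = prevb b0 (snd s) i"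
  define c where "c j t = joint \<alpha> \<beta> b0 \<pi> n t * gamma (fst t ! j) (prevb b0 (snd t) j)" for j t
  have c_nonneg: "0 \<le> c j t" for j t unfolding c_def using joint_nonneg by (simp add: gamma_def)
  have "joint \<alpha> \<beta> b0 \<pi> n s = c i s" using costly by (simp add: c_def gamma_def)
  also have "\<dots> \<le> (\<Sum>t\<in>seqs n. c i t)"
    by (rule member_le_sum) (use assms(3) finite_seqs c_nonneg in auto)
  also have "\<dots> \<le> (\<Sum>j\<le>n. \<Sum>t\<in>seqs n. c j t)"
    by (rule member_le_sum[where f="\<lambda>j. \<Sum>t\<in>seqs n. c j t"]) (use assms(2) c_nonneg in \<open>auto intro: sum_nonneg\<close>)
  also have "\<dots> \<le> 0" using assms(1) unfolding avg_cost_def c_def by (simp add: field_simps)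
  finally show False using assms(4) by simp
qed

end

end

section \<open>The time-invariant input\<close>

lemma valid_piTI: "0 \<le> k \<Longrightarrow> k \<le> 1 \<Longrightarrow> valid_policy (piTI k b0)"
  unfolding valid_policy_def piTI_def by auto

lemma sum_piTI_Qch:
  "(\<Sum>x\<in>UNIV. piTI k b0 i as bs x * Qch a b x (prevb b0 bs i) y) = PTI a b k (prevb b0 bs i) y"
  unfolding UNIV_bool piTI_def Qch_def PTI_def lambar_def
  by (cases "prevb b0 bs i"; cases y) (auto simp: algebra_simps)

context
  fixes a b k :: real and b0 :: bool and n :: nat
  assumes k: "0 \<le> k" "k \<le> 1"
begin

lemma cost_prob_piTI: "cost_prob a b b0 (piTI k b0) i = k"
proof -
  have "cost_prob a b b0 (piTI k b0) i = (\<Sum>s\<in>len_pairs i. prefix_joint a b b0 (piTI k b0) i (fst s) (snd s)) * k"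
    unfolding cost_prob_def sum_distrib_right by (rule sum.cong) (auto simp: piTI_def)
  then show ?thesis using sum_prefix_joint[OF valid_piTI[OF k]] by simp
qed

lemma avg_cost_piTI: "avg_cost a b b0 (piTI k b0) n = k"
  unfolding avg_cost_eq[OF valid_piTI[OF k]] cost_prob_piTI by simp

lemma output_prob_piTI_snoc:
  assumes "length zb = i"
  shows "output_prob a b b0 (piTI k b0) (Suc i) (zb @ [y])
       = PTI a b k (prevb b0 zb i) y * output_prob a b b0 (piTI k b0) i zb"
proof -
  have "output_prob a b b0 (piTI k b0) (Suc i) (zb @ [y])
      = (\<Sum>s\<in>len_pairs i. prefix_joint a b b0 (piTI k b0) i (fst s) (snd s) *
           (if snd s = zb then PTI a b k (prevb b0 zb i) y else 0))"
    unfolding output_prob_snoc[OF valid_piTI[OF k] assms]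
    by (rule sum.cong) (use sum_piTI_Qch[of k b0 i _ zb a b y] in auto)
  also have "\<dots> = PTI a b k (prevb b0 zb i) y * output_prob a b b0 (piTI k b0) i zb"
    unfolding output_prob_def sum_distrib_left by (rule sum.cong) auto
  finally show ?thesis .
qed

lemma prob_output_step_piTI:
  assumes "i \<le> n" "s \<in> seqs n"
  shows "prob (joint a b b0 (piTI k b0) n) (seqs n) (\<lambda>t. snd t ! i = snd s ! i \<and> take i (snd t) = take i (snd s))
     = prob (joint a b b0 (piTI k b0) n) (seqs n) (\<lambda>t. take i (snd t) = take i (snd s))
       * PTI a b k (prevb b0 (take i (snd s)) i) (snd s ! i)"
proof -
  have "prob (joint a b b0 (piTI k b0) n) (seqs n) (\<lambda>t. snd t ! i = snd s ! i \<and> take i (snd t) = take i (snd s))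
     = prob (joint a b b0 (piTI k b0) n) (seqs n) (\<lambda>t. take (Suc i) (snd t) = take i (snd s) @ [snd s ! i])"
  proof (rule prob_cong)
    fix t assume "t \<in> seqs n"
    then have "take (Suc i) (snd t) = take i (snd t) @ [snd t ! i]"
      using assms by (intro take_Suc_conv_app_nth) (auto simp: seqs_def)
    then show "(snd t ! i = snd s ! i \<and> take i (snd t) = take i (snd s)) =
          (take (Suc i) (snd t) = take i (snd s) @ [snd s ! i])" by auto
  qed
  also have "\<dots> = output_prob a b b0 (piTI k b0) (Suc i) (take i (snd s) @ [snd s ! i])"
    by (rule prob_output_prefix[OF valid_piTI[OF k]]) (use assms in simp)
  also have "\<dots> = PTI a b k (prevb b0 (take i (snd s)) i) (snd s ! i)
                  * output_prob a b b0 (piTI k b0) i (take i (snd s))"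
    by (rule output_prob_piTI_snoc) (use assms in \<open>auto simp: seqs_def\<close>)
  also have "\<dots> = PTI a b k (prevb b0 (take i (snd s)) i) (snd s ! i)
                  * prob (joint a b b0 (piTI k b0) n) (seqs n) (\<lambda>t. take i (snd t) = take i (snd s))"
    using assms by (simp add: prob_output_prefix[OF valid_piTI[OF k]])
  finally show ?thesis by (simp add: mult.commute)
qed

lemma output_transition_piTI:
  assumes "i \<le> n" "length bs = Suc i"
    and "prob (joint a b b0 (piTI k b0) n) (seqs n) (\<lambda>s. take i (snd s) = take i bs) > 0"
  shows "prob (joint a b b0 (piTI k b0) n) (seqs n) (\<lambda>s. take (Suc i) (snd s) = bs)
       / prob (joint a b b0 (piTI k b0) n) (seqs n) (\<lambda>s. take i (snd s) = take i bs)
       = PTI a b k (prevb b0 bs i) (bs ! i)"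
proof -
  have "bs = take i bs @ [bs ! i]"
    using assms(2) by (metis lessI take_Suc_conv_app_nth take_all order_refl)
  then have "output_prob a b b0 (piTI k b0) (Suc i) bs
      = PTI a b k (prevb b0 bs i) (bs ! i) * output_prob a b b0 (piTI k b0) i (take i bs)"
    using assms(2) output_prob_piTI_snoc[of "take i bs" i "bs ! i"] by (simp add: prevb_take)
  then show ?thesis
    using assms by (simp add: prob_output_prefix[OF valid_piTI[OF k]])
qed

end

lemma (in bssc) DI_piTI:
  assumes k: "0 \<le> k" "k \<le> 1"
  shows "DI \<alpha> \<beta> b0 (piTI k b0) n = real (Suc n) * tangent_rate \<alpha> \<beta> k k"
proof -
  have "DI \<alpha> \<beta> b0 (piTI k b0) n = (\<Sum>i\<le>n. tangent_rate \<alpha> \<beta> k k)"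
    unfolding DI_def
  proof (rule sum.cong[OF refl])
    fix i assume "i \<in> {..n}"
    then have i: "i \<le> n" by simp
    have "cmi (joint \<alpha> \<beta> b0 (piTI k b0) n) (seqs n) (\<lambda>s. take (Suc i) (fst s)) (\<lambda>s. snd s ! i) (\<lambda>s. take i (snd s))
       = (\<Sum>s\<in>seqs n. joint \<alpha> \<beta> b0 (piTI k b0) n s * log 2 (Qch \<alpha> \<beta> (fst s ! i) (prevb b0 (snd s) i) (snd s ! i)
             / PTI \<alpha> \<beta> k (prevb b0 (take i (snd s)) i) (snd s ! i)))"
      by (rule cmi_eq_expected_log_ratio[where r="\<lambda>zb y. PTI \<alpha> \<beta> k (prevb b0 zb i) y"])
         (use finite_seqs joint_nonneg[OF valid_piTI[OF k]] prob_channel_factor[OF valid_piTI[OF k] i]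
              prob_output_step_piTI[OF k i] in auto)
    also have "\<dots> = tangent_rate \<alpha> \<beta> k k"
      using expected_log_ratio[OF valid_piTI[OF k] i] cost_prob_piTI[OF k] by (simp add: prevb_take)
    finally show "cmi (joint \<alpha> \<beta> b0 (piTI k b0) n) (seqs n) (\<lambda>s. take (Suc i) (fst s)) (\<lambda>s. snd s ! i)
        (\<lambda>s. take i (snd s)) = tangent_rate \<alpha> \<beta> k k" .
  qed
  then show ?thesis by simp
qed

section \<open>The single-letter problem and the capacity\<close>

definition joint1 :: "real \<Rightarrow> real \<Rightarrow> bool \<Rightarrow> (bool \<Rightarrow> real) \<Rightarrow> bool \<times> bool \<Rightarrow> real" where
  "joint1 a b b0 p s = p (fst s) * Qch a b (fst s) b0 (snd s)"

lemma mi1_eq_cmi_joint1: "mi1 a b b0 p = cmi (joint1 a b b0 p) UNIV fst snd (\<lambda>_. ())"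
  unfolding mi1_def joint1_def ..

lemma cost1_eq: "cost1 b0 p = p b0"
  unfolding cost1_def UNIV_bool gamma_def by (cases b0) auto

lemma valid_dist_piTI: "0 \<le> k \<Longrightarrow> k \<le> 1 \<Longrightarrow> valid_dist (piTI k b0 0 [] [])"
  unfolding valid_dist_def piTI_def prevb_def by (cases b0) auto

lemma piTI_0_self: "piTI k b0 0 [] [] b0 = k"
  unfolding piTI_def prevb_def by simp

lemma prob_joint1_channel:
  "prob (joint1 a b b0 p) UNIV (\<lambda>t. fst t = fst s \<and> snd t = snd s \<and> () = ())
     = prob (joint1 a b b0 p) UNIV (\<lambda>t. fst t = fst s \<and> () = ()) * Qch a b (fst s) b0 (snd s)"
  unfolding prob_indicator[OF finite] sum_UNIV_pair UNIV_bool joint1_def Qch_def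
  by (cases s; cases b0) (auto simp: algebra_simps)

lemma sum_joint1_log_ratio:
  assumes "p True + p False = 1"
  shows "(\<Sum>s\<in>UNIV. joint1 a b b0 p s * log 2 (Qch a b (fst s) b0 (snd s) / PTI a b k b0 (snd s)))
       = tangent_rate a b k (p b0)"
proof -
  have "(\<Sum>s\<in>UNIV. joint1 a b b0 p s * log 2 (Qch a b (fst s) b0 (snd s) / PTI a b k b0 (snd s)))
      = (\<Sum>x\<in>UNIV. p x * (\<Sum>y\<in>UNIV. Qch a b x b0 y * log 2 (Qch a b x b0 y / PTI a b k b0 y)))"
    unfolding joint1_def sum_UNIV_pair by (simp add: sum_distrib_left mult.assoc)
  also have "\<dots> = tangent_rate a b k (p b0)" by (rule sum_input_log_ratio[OF assms])
  finally show ?thesis .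
qed

context bssc
begin

lemma joint1_nonneg: "valid_dist p \<Longrightarrow> 0 \<le> joint1 \<alpha> \<beta> b0 p s"
  unfolding joint1_def valid_dist_def using Qch_nonneg by simp

lemma sum_joint1:
  assumes "valid_dist p"
  shows "sum (joint1 \<alpha> \<beta> b0 p) UNIV = 1"
proof -
  have "sum (joint1 \<alpha> \<beta> b0 p) UNIV = (\<Sum>x\<in>UNIV. p x * (\<Sum>y\<in>UNIV. Qch \<alpha> \<beta> x b0 y))"
    unfolding joint1_def sum_UNIV_pair by (simp add: sum_distrib_left)
  then show ?thesis using assms unfolding sum_Qch valid_dist_def by (simp add: UNIV_bool)
qed

lemma mi1_le_tangent_rate:
  assumes p: "valid_dist p" and q: "0 \<le> lambar \<alpha> \<beta> k" "lambar \<alpha> \<beta> k \<le> 1"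
    and pos: "\<And>s. 0 < joint1 \<alpha> \<beta> b0 p s \<Longrightarrow> 0 < Qch \<alpha> \<beta> (fst s) b0 (snd s) \<Longrightarrow> 0 < PTI \<alpha> \<beta> k b0 (snd s)"
  shows "mi1 \<alpha> \<beta> b0 p \<le> tangent_rate \<alpha> \<beta> k (p b0)"
proof -
  have "mi1 \<alpha> \<beta> b0 p \<le> (\<Sum>s\<in>UNIV. joint1 \<alpha> \<beta> b0 p s * log 2 (Qch \<alpha> \<beta> (fst s) b0 (snd s) / PTI \<alpha> \<beta> k b0 (snd s)))"
    unfolding mi1_eq_cmi_joint1
    by (rule cmi_le_expected_log_ratio[where r="\<lambda>_ y. PTI \<alpha> \<beta> k b0 y"])
       (use q joint1_nonneg[OF p] sum_joint1[OF p] prob_joint1_channel sum_PTI_le_1[OF q] pos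
        in \<open>auto simp: PTI_def\<close>)
  also have "\<dots> = tangent_rate \<alpha> \<beta> k (p b0)"
    using p unfolding valid_dist_def by (intro sum_joint1_log_ratio) simp
  finally show ?thesis .
qed

lemma mi1_piTI:
  assumes k: "0 \<le> k" "k \<le> 1"
  shows "mi1 \<alpha> \<beta> b0 (piTI k b0 0 [] []) = tangent_rate \<alpha> \<beta> k k"
proof -
  define p where "p = piTI k b0 0 [] []"
  have "prob (joint1 \<alpha> \<beta> b0 p) UNIV (\<lambda>t. snd t = snd s \<and> () = ())
      = prob (joint1 \<alpha> \<beta> b0 p) UNIV (\<lambda>t. () = ()) * PTI \<alpha> \<beta> k b0 (snd s)" for s
    unfolding prob_indicator[OF finite] sum_UNIV_pair UNIV_bool joint1_def Qch_def p_def
      piTI_def prevb_def PTI_def lambar_def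
    by (cases s; cases b0) (auto simp: algebra_simps)
  then have "mi1 \<alpha> \<beta> b0 p = (\<Sum>s\<in>UNIV. joint1 \<alpha> \<beta> b0 p s * log 2 (Qch \<alpha> \<beta> (fst s) b0 (snd s) / PTI \<alpha> \<beta> k b0 (snd s)))"
    unfolding mi1_eq_cmi_joint1
    by (intro cmi_eq_expected_log_ratio[where r="\<lambda>_ y. PTI \<alpha> \<beta> k b0 y"])
       (use joint1_nonneg[OF valid_dist_piTI[OF k]] prob_joint1_channel in \<open>auto simp: p_def\<close>)
  also have "\<dots> = tangent_rate \<alpha> \<beta> k k"
    using valid_dist_piTI[OF k, of b0] unfolding valid_dist_def
    by (subst sum_joint1_log_ratio) (simp_all add: p_def piTI_0_self)
  finally show ?thesis unfolding p_def .
qed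

end

context bssc_nondeg
begin

text \<open>PTI of cost min \<kappa> \<nu> can vanish only if \<kappa> = 0; then a zero-cost policy never sends
  A_i = B_{i-1}, and for the other input the channel coincides with PTI of cost 0.\<close>

lemma lambar_min_cases:
  assumes "0 \<le> \<kappa>"
  obtains "0 < lambar \<alpha> \<beta> (min \<kappa> (nu \<alpha> \<beta>))" "lambar \<alpha> \<beta> (min \<kappa> (nu \<alpha> \<beta>)) < 1" | "\<kappa> = 0"
proof -
  have "0 < min \<kappa> (nu \<alpha> \<beta>) \<or> min \<kappa> (nu \<alpha> \<beta>) = nu \<alpha> \<beta> \<or> \<kappa> = 0"
    using assms by (auto simp: min_def)
  then consider "0 < min \<kappa> (nu \<alpha> \<beta>)" | "min \<kappa> (nu \<alpha> \<beta>) = nu \<alpha> \<beta>" | "\<kappa> = 0"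
    by blast
  then show ?thesis
  proof cases
    case 1
    then show ?thesis using lambar_strict_range[OF 1] that by simp
  next
    case 2
    then show ?thesis using lambar_nu lam_gt_0 lam_lt_1 that by metis
  qed (use that in blast)
qed

lemma DI_le_ti_rate:
  assumes \<kappa>: "0 \<le> \<kappa>" and \<pi>: "valid_policy \<pi>" and cost: "avg_cost \<alpha> \<beta> b0 \<pi> n \<le> \<kappa>"
  shows "DI \<alpha> \<beta> b0 \<pi> n \<le> real (Suc n) * ti_rate \<alpha> \<beta> (min \<kappa> (nu \<alpha> \<beta>))"
proof -
  define k where "k = min \<kappa> (nu \<alpha> \<beta>)"
  have k: "0 \<le> k" "k \<le> 1" using \<kappa> nu_range by (auto simp: k_def)
  have "DI \<alpha> \<beta> b0 \<pi> n \<le> real (Suc n) * tangent_rate \<alpha> \<beta> k (avg_cost \<alpha> \<beta> b0 \<pi> n)"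
  proof (rule DI_le_tangent_rate[OF \<pi>])
    show "0 \<le> lambar \<alpha> \<beta> k" "lambar \<alpha> \<beta> k \<le> 1" using lambar_range[OF k] by auto
    fix i s assume i: "i \<le> n" and s: "s \<in> seqs n" and joint: "0 < joint \<alpha> \<beta> b0 \<pi> n s"
      and channel: "0 < Qch \<alpha> \<beta> (fst s ! i) (prevb b0 (snd s) i) (snd s ! i)"
    from \<kappa> show "0 < PTI \<alpha> \<beta> k (prevb b0 (snd s) i) (snd s ! i)"
    proof (cases rule: lambar_min_cases)
      case 1
      then show ?thesis by (simp add: PTI_pos k_def)
    next
      case 2
      then have "fst s ! i \<noteq> prevb b0 (snd s) i"
        using zero_cost_support[OF \<pi> _ i s joint] cost by simp
      moreover have "k = 0" using 2 nu_range by (simp add: k_def)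
      ultimately show ?thesis using channel by (simp add: Qch_eq_PTI_0)
    qed
  qed
  also have "\<dots> \<le> real (Suc n) * ti_rate \<alpha> \<beta> k"
    using tangent_rate_le[OF \<kappa> avg_cost_nonneg[OF \<pi>] cost] by (simp add: k_def)
  finally show ?thesis unfolding k_def .
qed

lemma DI_piTI_eq_ti_rate:
  "0 \<le> k \<Longrightarrow> k \<le> nu \<alpha> \<beta> \<Longrightarrow> DI \<alpha> \<beta> b0 (piTI k b0) n = real (Suc n) * ti_rate \<alpha> \<beta> k"
  using DI_piTI[of k b0 n] tangent_rate_self[of k] nu_range by simp

lemma Cfb_eq:
  assumes "0 \<le> \<kappa>"
  shows "Cfb \<alpha> \<beta> n \<kappa> b0 = real (Suc n) * ti_rate \<alpha> \<beta> (min \<kappa> (nu \<alpha> \<beta>))"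
  unfolding Cfb_def
proof (rule cSup_eq_maximum)
  define k where "k = min \<kappa> (nu \<alpha> \<beta>)"
  have k: "0 \<le> k" "k \<le> nu \<alpha> \<beta>" "k \<le> 1" using assms nu_range by (auto simp: k_def)
  have "valid_policy (piTI k b0)" "avg_cost \<alpha> \<beta> b0 (piTI k b0) n \<le> \<kappa>"
    using valid_piTI avg_cost_piTI k by (auto simp: k_def)
  then show "real (Suc n) * ti_rate \<alpha> \<beta> (min \<kappa> (nu \<alpha> \<beta>))
      \<in> {DI \<alpha> \<beta> b0 \<pi> n |\<pi>. valid_policy \<pi> \<and> avg_cost \<alpha> \<beta> b0 \<pi> n \<le> \<kappa>}"
    using DI_piTI_eq_ti_rate[OF k(1,2), of b0 n] unfolding k_def
    by (auto intro!: exI[of _ "piTI (min \<kappa> (nu \<alpha> \<beta>)) b0"])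
qed (use DI_le_ti_rate[OF assms] in blast)

lemma Sup_mi1_eq:
  assumes \<kappa>: "0 \<le> \<kappa>" "\<kappa> \<le> nu \<alpha> \<beta>"
  shows "Sup {mi1 \<alpha> \<beta> b0 q | q. valid_dist q \<and> cost1 b0 q \<le> \<kappa>} = mi1 \<alpha> \<beta> b0 (piTI \<kappa> b0 0 [] [])"
    and "mi1 \<alpha> \<beta> b0 (piTI \<kappa> b0 0 [] []) = ti_rate \<alpha> \<beta> \<kappa>"
proof -
  have \<kappa>1: "\<kappa> \<le> 1" using \<kappa> nu_range by simp
  show max: "mi1 \<alpha> \<beta> b0 (piTI \<kappa> b0 0 [] []) = ti_rate \<alpha> \<beta> \<kappa>"
    using mi1_piTI[OF \<kappa>(1) \<kappa>1] tangent_rate_self[OF \<kappa>] by simp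
  have "mi1 \<alpha> \<beta> b0 q \<le> ti_rate \<alpha> \<beta> \<kappa>" if q: "valid_dist q" "cost1 b0 q \<le> \<kappa>" for q
  proof -
    have min: "min \<kappa> (nu \<alpha> \<beta>) = \<kappa>" using \<kappa> by simp
    have "mi1 \<alpha> \<beta> b0 q \<le> tangent_rate \<alpha> \<beta> \<kappa> (q b0)"
    proof (rule mi1_le_tangent_rate[OF q(1)])
      show "0 \<le> lambar \<alpha> \<beta> \<kappa>" "lambar \<alpha> \<beta> \<kappa> \<le> 1" using lambar_range[OF \<kappa>(1) \<kappa>1] by auto
      fix s assume joint: "0 < joint1 \<alpha> \<beta> b0 q s" and channel: "0 < Qch \<alpha> \<beta> (fst s) b0 (snd s)"
      from \<kappa>(1) show "0 < PTI \<alpha> \<beta> \<kappa> b0 (snd s)"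
      proof (cases rule: lambar_min_cases)
        case 1
        then show ?thesis using min by (simp add: PTI_pos)
      next
        case 2
        then have "q b0 = 0" using q unfolding cost1_eq valid_dist_def by (metis order_antisym)
        have "fst s \<noteq> b0"
        proof
          assume "fst s = b0"
          then show False using joint \<open>q b0 = 0\<close> by (simp add: joint1_def)
        qed
        then show ?thesis using channel 2 by (simp add: Qch_eq_PTI_0)
      qed
    qed
    also have "\<dots> \<le> ti_rate \<alpha> \<beta> \<kappa>"
      using tangent_rate_le[OF \<kappa>(1), of "q b0"] q unfolding min cost1_eq valid_dist_def by simp
    finally show ?thesis .
  qed
  then have bound: "x \<le> mi1 \<alpha> \<beta> b0 (piTI \<kappa> b0 0 [] [])"
    if "x \<in> {mi1 \<alpha> \<beta> b0 q | q. valid_dist q \<and> cost1 b0 q \<le> \<kappa>}" for x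
    using that max by auto
  have "valid_dist (piTI \<kappa> b0 0 [] [])" "cost1 b0 (piTI \<kappa> b0 0 [] []) \<le> \<kappa>"
    using valid_dist_piTI[OF \<kappa>(1) \<kappa>1] by (simp_all add: cost1_eq piTI_0_self)
  then show "Sup {mi1 \<alpha> \<beta> b0 q | q. valid_dist q \<and> cost1 b0 q \<le> \<kappa>} = mi1 \<alpha> \<beta> b0 (piTI \<kappa> b0 0 [] [])"
    using bound by (intro cSup_eq_maximum) auto
qed

lemma ti_rate_min_nu:
  "ti_rate \<alpha> \<beta> (min \<kappa> (nu \<alpha> \<beta>)) =
     (if \<kappa> \<le> nu \<alpha> \<beta> then binH (lambar \<alpha> \<beta> \<kappa>) - \<kappa> * binH \<alpha> - (1 - \<kappa>) * binH \<beta>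
      else binH (lam \<alpha> \<beta>) - nu \<alpha> \<beta> * binH \<alpha> - (1 - nu \<alpha> \<beta>) * binH \<beta>)"
  unfolding ti_rate_def using lambar_nu by auto

end

theorem mainTheorem10:
  fixes \<alpha> \<beta> :: real
  assumes "0 \<le> \<alpha>" "\<alpha> \<le> 1" "0 \<le> \<beta>" "\<beta> \<le> 1" "\<alpha> + \<beta> \<noteq> 1"
  shows
    "(\<forall>\<kappa> n b0. 0 \<le> \<kappa> \<and> \<kappa> \<le> nu \<alpha> \<beta> \<longrightarrow>
        valid_policy (piTI \<kappa> b0)
      \<and> avg_cost \<alpha> \<beta> b0 (piTI \<kappa> b0) n \<le> \<kappa>
      \<and> DI \<alpha> \<beta> b0 (piTI \<kappa> b0) n = Cfb \<alpha> \<beta> n \<kappa> b0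
      \<and> (\<forall>i\<le>n. \<forall>bs. length bs = Suc i \<longrightarrow>
            prob (joint \<alpha> \<beta> b0 (piTI \<kappa> b0) n) (seqs n) (\<lambda>s. take i (snd s) = take i bs) > 0 \<longrightarrow>
            prob (joint \<alpha> \<beta> b0 (piTI \<kappa> b0) n) (seqs n) (\<lambda>s. take (Suc i) (snd s) = bs)
            / prob (joint \<alpha> \<beta> b0 (piTI \<kappa> b0) n) (seqs n) (\<lambda>s. take i (snd s) = take i bs)
            = PTI \<alpha> \<beta> \<kappa> (prevb b0 bs i) (bs ! i))
      \<and> (\<exists>p. valid_dist p \<and> cost1 b0 p \<le> \<kappa> \<and>
            mi1 \<alpha> \<beta> b0 p = Sup {mi1 \<alpha> \<beta> b0 q | q. valid_dist q \<and> cost1 b0 q \<le> \<kappa>})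
      \<and> Cfb \<alpha> \<beta> n \<kappa> b0
          = real (Suc n) * Sup {mi1 \<alpha> \<beta> b0 q | q. valid_dist q \<and> cost1 b0 q \<le> \<kappa>})
   \<and> (\<forall>\<kappa> b0. 0 \<le> \<kappa> \<longrightarrow>
        (\<lambda>n. Cfb \<alpha> \<beta> n \<kappa> b0 / real (Suc n)) \<longlonglongrightarrow>
          (if \<kappa> \<le> nu \<alpha> \<beta>
           then binH (lambar \<alpha> \<beta> \<kappa>) - \<kappa> * binH \<alpha> - (1 - \<kappa>) * binH \<beta>
           else binH (lam \<alpha> \<beta>) - nu \<alpha> \<beta> * binH \<alpha> - (1 - nu \<alpha> \<beta>) * binH \<beta>))"
proof -
  interpret bssc_nondeg \<alpha> \<beta> by unfold_locales (use assms in auto)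
  show ?thesis
  proof (intro conjI allI impI)
    fix \<kappa> n b0 assume \<kappa>: "0 \<le> \<kappa> \<and> \<kappa> \<le> nu \<alpha> \<beta>"
    then have \<kappa>1: "0 \<le> \<kappa>" "\<kappa> \<le> 1" using nu_range by auto
    show "valid_policy (piTI \<kappa> b0)" by (rule valid_piTI[OF \<kappa>1])
    show "avg_cost \<alpha> \<beta> b0 (piTI \<kappa> b0) n \<le> \<kappa>" using avg_cost_piTI[OF \<kappa>1] by simp
    show "DI \<alpha> \<beta> b0 (piTI \<kappa> b0) n = Cfb \<alpha> \<beta> n \<kappa> b0" using DI_piTI_eq_ti_rate Cfb_eq \<kappa> by simp
    show "\<exists>p. valid_dist p \<and> cost1 b0 p \<le> \<kappa> \<and>
            mi1 \<alpha> \<beta> b0 p = Sup {mi1 \<alpha> \<beta> b0 q | q. valid_dist q \<and> cost1 b0 q \<le> \<kappa>}"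
      using Sup_mi1_eq(1)[of \<kappa> b0] valid_dist_piTI[OF \<kappa>1, of b0] \<kappa>
      by (intro exI[of _ "piTI \<kappa> b0 0 [] []"]) (simp add: cost1_eq piTI_0_self)
    show "Cfb \<alpha> \<beta> n \<kappa> b0 = real (Suc n) * Sup {mi1 \<alpha> \<beta> b0 q | q. valid_dist q \<and> cost1 b0 q \<le> \<kappa>}"
      using Cfb_eq Sup_mi1_eq \<kappa> by simp
    fix i bs assume "i \<le> n" "length bs = Suc i"
      "prob (joint \<alpha> \<beta> b0 (piTI \<kappa> b0) n) (seqs n) (\<lambda>s. take i (snd s) = take i bs) > 0"
    then show "prob (joint \<alpha> \<beta> b0 (piTI \<kappa> b0) n) (seqs n) (\<lambda>s. take (Suc i) (snd s) = bs)
            / prob (joint \<alpha> \<beta> b0 (piTI \<kappa> b0) n) (seqs n) (\<lambda>s. take i (snd s) = take i bs)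
            = PTI \<alpha> \<beta> \<kappa> (prevb b0 bs i) (bs ! i)"
      by (rule output_transition_piTI[OF \<kappa>1])
  next
    fix \<kappa> :: real and b0 :: bool
    assume "0 \<le> \<kappa>"
    then have "Cfb \<alpha> \<beta> n \<kappa> b0 / real (Suc n) = ti_rate \<alpha> \<beta> (min \<kappa> (nu \<alpha> \<beta>))" for n
      using Cfb_eq by (simp del: of_nat_Suc)
    then show "(\<lambda>n. Cfb \<alpha> \<beta> n \<kappa> b0 / real (Suc n)) \<longlonglongrightarrow>
          (if \<kappa> \<le> nu \<alpha> \<beta>
           then binH (lambar \<alpha> \<beta> \<kappa>) - \<kappa> * binH \<alpha> - (1 - \<kappa>) * binH \<beta>
           else binH (lam \<alpha> \<beta>) - nu \<alpha> \<beta> * binH \<alpha> - (1 - nu \<alpha> \<beta>) * binH \<beta>)"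
      unfolding ti_rate_min_nu[symmetric] by simp
  qed
qed

end
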